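(* For each even integer $c\ge2$, let $\mathcal{P}_c$ be the Gauss–Legendre distribution. Then $\mathcal{R}_{\ell,\mathcal{P}_c}\ge\frac{c+1}{c\pi}$ for all $1\le\ell\le c$, and for every fixed integer $\ell\ge1$, $\lim_{c\to\infty}\mathcal{R}_{\ell,\mathcal{P}_c}=1/\pi$ (limit over even $c\ge\ell$).
   Context: For a probability distribution $\mathcal{P}$ on a finite subset of $(0,1)$, $E_p$ is expectation over $p\sim\mathcal{P}$; $\sigma(p)=\sqrt{(1-p)/p}$; $f_{\ell,x}(p)=p^x(1-p)^{\ell-x}(x\sigma(p)-(\ell-x)\sigma(1-p))$; $R_{\ell,x}=\max\{0,E_p[f_{\ell,x}(p)]\}$; $\mathcal{R}_{\ell,\mathcal{P}}=E_p[-f_{\ell,0}(p)]-\sum_{x=1}^{\ell-1}\binom{\ell}{x}R_{\ell,x}$. Gauss–Legendre distribution: for $c=2\nu$, let $\widetilde{L}_\nu(t)=\left.\left(\frac{d}{du}\right)^{\nu}(u^2-1)^{\nu}\right|_{u=2t-1}$; $\mathcal{P}_c$ takes as values the $\nu$ zeroes $p$ of $\widetilde L_\nu$ (all in $(0,1)$), each with probability proportional to $\bigl((p(1-p))^{3/2}\widetilde L_\nu{}'(p)^2\bigr)^{-1}$, normalized to total probability $1$. *)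

theory Defs
  imports "HOL-Analysis.Analysis" "HOL-Computational_Algebra.Polynomial"
begin

text \<open>A distribution on a finite subset of (0,1) is represented by its expectation
  operator E :: (real \<Rightarrow> real) \<Rightarrow> real.\<close>

definition sigma :: "real \<Rightarrow> real" where
  "sigma p = sqrt ((1 - p) / p)"

definition fLX :: "nat \<Rightarrow> nat \<Rightarrow> real \<Rightarrow> real" where
  "fLX l x p = p ^ x * (1 - p) ^ (l - x) *
      (real x * sigma p - real (l - x) * sigma (1 - p))"

definition R_lx :: "((real \<Rightarrow> real) \<Rightarrow> real) \<Rightarrow> nat \<Rightarrow> nat \<Rightarrow> real" where
  "R_lx E l x = max 0 (E (fLX l x))"

definition calR :: "nat \<Rightarrow> ((real \<Rightarrow> real) \<Rightarrow> real) \<Rightarrow> real" where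
  "calR l E = E (\<lambda>p. - fLX l 0 p) - (\<Sum>x = 1..l - 1. real (l choose x) * R_lx E l x)"

definition legendre_shift :: "nat \<Rightarrow> real poly" where
  "legendre_shift \<nu> = pcompose (((pderiv :: real poly \<Rightarrow> real poly) ^^ \<nu>) ([:-1, 0, 1:] ^ \<nu>)) [:-1, 2:]"

definition GL_weight :: "nat \<Rightarrow> real \<Rightarrow> real" where
  "GL_weight \<nu> p = 1 / ((p * (1 - p)) powr (3/2) * (poly (pderiv (legendre_shift \<nu>)) p)\<^sup>2)"

definition GL_support :: "nat \<Rightarrow> real set" where
  "GL_support \<nu> = {p. poly (legendre_shift \<nu>) p = 0}"

definition GL_E :: "nat \<Rightarrow> (real \<Rightarrow> real) \<Rightarrow> real" where
  "GL_E c g = (let \<nu> = c div 2 in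
     (\<Sum>p\<in>GL_support \<nu>. GL_weight \<nu> p * g p) / (\<Sum>p\<in>GL_support \<nu>. GL_weight \<nu> p))"

end

theory Submission
  imports Defs "HOL-Real_Asymp.Real_Asymp"
begin

text \<open>
  Let \<open>P\<close> be the Legendre polynomial of degree \<open>n\<close> (normalised by \<open>P(1) = 1\<close>), \<open>c = 2 n\<close>,
  and let \<open>\<lambda>\<^sub>y\<close> be the Gauss--Legendre weights at its zeros \<open>y\<close>. By Christoffel's formula
  \<open>\<lambda>\<^sub>y = 2 / ((1 - y\<^sup>2) P'(y)\<^sup>2)\<close>, the atom of \<open>P\<^sub>c\<close> at
  \<open>t = (1 + y) / 2\<close> has probability proportional to \<open>\<lambda>\<^sub>y / \<surd>(1 - y\<^sup>2)\<close>.
  For \<open>x < l \<le> 2 n\<close>, \<open>f\<^sub>l\<^sub>,\<^sub>x(t)\<close> is \<open>\<surd>(t (1 - t))\<close> times the derivative of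
  \<open>t\<^sup>x (1 - t)\<^sup>l\<^sup>-\<^sup>x\<close>; the square roots cancel and exactness of Gauss quadrature in
  degree \<open>< 2 n\<close> gives \<open>E[f\<^sub>l\<^sub>,\<^sub>x] = [t\<^sup>x (1 - t)\<^sup>l\<^sup>-\<^sup>x]\<^sub>0\<^sup>1 / Q\<^sub>n\<close> with
  \<open>Q\<^sub>n = \<Sum>\<^sub>y \<lambda>\<^sub>y / \<surd>(1 - y\<^sup>2)\<close>, the quadrature of \<open>\<integral>\<^sub>-\<^sub>1\<^sup>1 dy / \<surd>(1 - y\<^sup>2) = \<pi>\<close>.
  Hence \<open>R\<^sub>l = 1 / Q\<^sub>n\<close> for all \<open>1 \<le> l \<le> c\<close>.

  Exactness on the partial sums of the binomial series of \<open>1 / \<surd>(1 - y\<^sup>2)\<close>, whose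
  coefficients are nonnegative, bounds \<open>Q\<^sub>n\<close> from below by partial sums of the arcsine
  series at \<open>1\<close>, which tend to \<open>\<pi>\<close>. From above, a Sonin-type function that is monotone
  on either side of \<open>0\<close> gives \<open>(1 - y\<^sup>2)\<^sup>3\<^sup>/\<^sup>2 P'(y)\<^sup>2 \<ge> P'(0)\<^sup>2 + ((n + 1/2)\<^sup>2 + 1/4) P(0)\<^sup>2\<close>
  at every node; the values at \<open>0\<close> are central binomial coefficients, and Wallis' product
  bounds them so that each term of \<open>Q\<^sub>n\<close> is at most \<open>2\<pi> / (2 n + 1)\<close>, whence
  \<open>Q\<^sub>n \<le> c \<pi> / (c + 1)\<close>.
\<close>

section \<open>Integrals of polynomials over [-1, 1]\<close>

definition poly_integral :: "real poly \<Rightarrow> real" where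
  "poly_integral p = integral {-1..1} (poly p)"

lemma poly_integral_0 [simp]: "poly_integral 0 = 0"
  by (simp add: poly_integral_def poly_0[abs_def])

lemma poly_integrable_on: "poly (p :: real poly) integrable_on {a..b}"
  by (rule integrable_continuous_real) (auto intro: continuous_intros)

lemma poly_integral_pderiv: "poly_integral (pderiv q) = poly q 1 - poly q (-1)"
  unfolding poly_integral_def
  by (intro integral_unique fundamental_theorem_of_calculus)
     (auto intro: DERIV_subset poly_DERIV simp flip: has_real_derivative_iff_has_vector_derivative)

lemma poly_integral_add: "poly_integral (p + q) = poly_integral p + poly_integral q"
  unfolding poly_integral_def poly_add by (intro integral_add poly_integrable_on)

lemma poly_integral_diff: "poly_integral (p - q) = poly_integral p - poly_integral q"
  unfolding poly_integral_def poly_diff by (intro integral_diff poly_integrable_on)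

lemma poly_integral_smult: "poly_integral (smult c p) = c * poly_integral p"
proof -
  have "poly (smult c p) = (\<lambda>x. c * poly p x)"
    by auto
  then show ?thesis
    using integral_mult[OF poly_integrable_on[of p "-1" 1], of c] by (simp add: poly_integral_def)
qed

lemma poly_integral_sum: "poly_integral (sum f A) = (\<Sum>a\<in>A. poly_integral (f a))"
  unfolding poly_integral_def poly_sum
  by (induction A rule: infinite_finite_induct) (auto simp: integral_add poly_integrable_on integrable_sum)

lemma poly_integral_monom: "poly_integral (monom c m) = c * (1 - (-1) ^ Suc m) / real (Suc m)"
proof -
  have "monom c m = pderiv (monom (c / real (Suc m)) (Suc m))"
    by (simp add: pderiv_monom)
  then have "poly_integral (monom c m) = c / real (Suc m) * 1 ^ Suc m - c / real (Suc m) * (-1) ^ Suc m"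
    by (simp only: poly_integral_pderiv poly_monom)
  then show ?thesis
    by (simp add: right_diff_distrib diff_divide_distrib del: power_Suc)
qed

section \<open>Rodrigues polynomials and their roots\<close>

lemma poly_Rolle:
  fixes p :: "real poly"
  assumes "a < b" "poly p a = 0" "poly p b = 0"
  obtains z where "a < z" "z < b" "poly (pderiv p) z = 0"
proof -
  have "\<exists>z>a. z < b \<and> (poly p has_real_derivative 0) (at z)"
    by (rule Rolle) (use assms in \<open>auto intro: continuous_intros poly_differentiable\<close>)
  then show ?thesis
    using that poly_DERIV DERIV_unique by blast
qed

lemma poly_pderiv_roots_between:
  fixes p :: "real poly"
  assumes "finite A" "\<And>x. x \<in> A \<Longrightarrow> poly p x = 0"
  obtains B where "finite B" "card B = card A - 1" "B \<subseteq> {Min A<..<Max A} - A"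
    "\<And>z. z \<in> B \<Longrightarrow> poly (pderiv p) z = 0"
  using assms
proof (induction A arbitrary: thesis rule: finite_linorder_max_induct)
  case empty
  then show ?case by fastforce
next
  case (insert b A)
  show ?case
  proof (cases "A = {}")
    case True
    then show ?thesis using insert.prems(1)[of "{}"] by auto
  next
    case False
    obtain B where B: "finite B" "card B = card A - 1" "B \<subseteq> {Min A<..<Max A} - A"
      "\<And>z. z \<in> B \<Longrightarrow> poly (pderiv p) z = 0"
      using insert by blast
    have "Max A \<in> A" "\<And>a. a \<in> A \<Longrightarrow> Min A \<le> a \<and> a \<le> Max A"
      using False insert.hyps(1) by auto
    then have "Max A < b" "poly p (Max A) = 0" "Min A \<le> Max A"
      using insert.hyps(2) insert.prems(2) by auto
    then obtain z where z: "Max A < z" "z < b" "poly (pderiv p) z = 0"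
      using poly_Rolle[of "Max A" b p] insert.prems(2)[of b] by blast
    have "Min (insert b A) = Min A" "Max (insert b A) = b"
      using Min_insert[OF insert.hyps(1) False, of b] Max_insert[OF insert.hyps(1) False, of b]
        \<open>Max A < b\<close> \<open>Min A \<le> Max A\<close> by linarith+
    then have B': "insert z B \<subseteq> {Min (insert b A)<..<Max (insert b A)} - insert b A"
      using B(3) z(1,2) \<open>Max A < b\<close> \<open>Min A \<le> Max A\<close>
        \<open>\<And>a. a \<in> A \<Longrightarrow> Min A \<le> a \<and> a \<le> Max A\<close>
      by (auto simp: subset_iff) (meson not_less)+
    have "z \<notin> B"
      using B(3) z(1) by fastforce
    have "card A > 0" "b \<notin> A"
      using False insert.hyps by auto
    then have "card (insert z B) = card (insert b A) - 1"
      using \<open>z \<notin> B\<close> B(1,2) insert.hyps(1) by simp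
    then show ?thesis
      using insert.prems(1)[OF _ _ B'] B(1,4) z(3) by blast
  qed
qed

lemma higher_pderiv_eq_0: "degree p < k \<Longrightarrow> (pderiv ^^ k) p = 0"
  by (intro poly_eqI) (simp add: coeff_higher_pderiv coeff_eq_0)

lemma higher_pderiv_linear_power_mult:
  fixes a :: "'a :: field_char_0"
  assumes "k \<le> n"
  shows "\<exists>Q. (pderiv ^^ k) ([:-a, 1:] ^ n * q) = [:-a, 1:] ^ (n - k) * Q \<and>
             poly Q a = fact n / fact (n - k) * poly q a"
  using assms
proof (induction k)
  case 0
  then show ?case by auto
next
  case (Suc k)
  then obtain Q where Q: "(pderiv ^^ k) ([:-a, 1:] ^ n * q) = [:-a, 1:] ^ (n - k) * Q"
    "poly Q a = fact n / fact (n - k) * poly q a"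
    by auto
  obtain m where m: "n - k = Suc m"
    using Suc.prems by (metis Suc_diff_le Suc_le_lessD diff_Suc_Suc less_imp_Suc_add add_diff_cancel_left')
  define Q' where "Q' = smult (of_nat (Suc m)) Q + [:-a, 1:] * pderiv Q"
  have "(pderiv ^^ Suc k) ([:-a, 1:] ^ n * q) = pderiv ([:-a, 1:] ^ Suc m * Q)"
    using Q m by simp
  also have "\<dots> = [:-a, 1:] ^ m * Q'"
  proof -
    have "pderiv [:-a, 1:] = 1"
      by (simp add: pderiv_pCons)
    then show ?thesis
      unfolding pderiv_mult pderiv_power_Suc Q'_def by (simp add: algebra_simps)
  qed
  also have nk: "m = n - Suc k"
    using m by simp
  finally have "(pderiv ^^ Suc k) ([:-a, 1:] ^ n * q) = [:-a, 1:] ^ (n - Suc k) * Q'" .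
  moreover have "poly Q' a = fact n / fact (n - Suc k) * poly q a"
    using Q(2) m nk by (simp add: Q'_def field_simps)
  ultimately show ?case by blast
qed

text \<open>\<open>rodrigues n n\<close> is \<open>2\<^sup>n n!\<close> times the Legendre polynomial of degree \<open>n\<close>.\<close>

definition rodrigues :: "nat \<Rightarrow> nat \<Rightarrow> real poly" where
  "rodrigues n k = (pderiv ^^ k) ([:-1, 0, 1:] ^ n)"

lemma rodrigues_Suc: "rodrigues n (Suc k) = pderiv (rodrigues n k)"
  by (simp add: rodrigues_def)

lemma degree_rodrigues: "degree (rodrigues n k) = 2 * n - k"
  by (simp add: rodrigues_def degree_higher_pderiv degree_power_eq)

lemma rodrigues_nonzero:
  assumes "k \<le> 2 * n"
  shows "rodrigues n k \<noteq> 0"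
proof -
  have "degree ([:-1, 0, 1:] ^ n :: real poly) = 2 * n"
    by (simp add: degree_power_eq)
  then have "coeff ([:-1, 0, 1:] ^ n :: real poly) (2 * n) = 1"
    using lead_coeff_power[of "[:-1, 0, 1 :: real:]" n] by simp
  then have "coeff (rodrigues n k) (2 * n - k) = pochhammer (real (Suc (2 * n - k))) k"
    using assms by (simp add: rodrigues_def coeff_higher_pderiv)
  moreover have "pochhammer (real (Suc (2 * n - k))) k > 0"
    by (rule pochhammer_pos) simp
  ultimately show ?thesis
    by auto
qed

text \<open>The factor \<open>[:-(-1), 1:]\<close> is written so as to match \<open>[:-a, 1:]\<close> with \<open>a = -1\<close>.\<close>

lemma rodrigues_factor:
  "[:-1, 0, 1:] ^ n = [:-1, 1:] ^ n * [:-(-1), 1 :: real:] ^ n"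
  "[:-1, 0, 1:] ^ n = [:-(-1), 1:] ^ n * [:-1, 1 :: real:] ^ n"
proof -
  have q: "[:-1, 0, 1:] = [:-1, 1:] * [:-(-1), 1 :: real:]"
    by simp
  show "[:-1, 0, 1:] ^ n = [:-1, 1:] ^ n * [:-(-1), 1 :: real:] ^ n"
    unfolding q by (rule power_mult_distrib)
  show "[:-1, 0, 1:] ^ n = [:-(-1), 1:] ^ n * [:-1, 1 :: real:] ^ n"
    unfolding q power_mult_distrib by (rule mult.commute)
qed

lemma poly_rodrigues_pm1:
  assumes "k < n"
  shows "poly (rodrigues n k) 1 = 0" "poly (rodrigues n k) (-1) = 0"
proof -
  obtain Q where "rodrigues n k = [:-1, 1:] ^ (n - k) * Q"
    using higher_pderiv_linear_power_mult[of k n 1 "[:-(-1), 1:] ^ n"] assms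
    unfolding rodrigues_def rodrigues_factor(1) by auto
  then show "poly (rodrigues n k) 1 = 0"
    using assms by simp
  obtain Q where "rodrigues n k = [:-(-1), 1:] ^ (n - k) * Q"
    using higher_pderiv_linear_power_mult[of k n "-1" "[:-1, 1:] ^ n"] assms
    unfolding rodrigues_def rodrigues_factor(2) by auto
  then show "poly (rodrigues n k) (-1) = 0"
    using assms by simp
qed

lemma poly_rodrigues_1: "poly (rodrigues n n) 1 = fact n * 2 ^ n"
proof -
  obtain Q where "rodrigues n n = Q" "poly Q 1 = fact n * poly ([:-(-1), 1:] ^ n) 1"
    using higher_pderiv_linear_power_mult[of n n 1 "[:-(-1), 1:] ^ n"]
    unfolding rodrigues_def rodrigues_factor(1) by auto
  then show ?thesis
    by (simp add: poly_power)
qed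

lemma rodrigues_roots_in_interval:
  assumes "k \<le> n"
  shows "\<exists>A. finite A \<and> card A = k \<and> A \<subseteq> {-1<..<1} \<and> (\<forall>x\<in>A. poly (rodrigues n k) x = 0)"
  using assms
proof (induction k)
  case 0
  show ?case by (intro exI[of _ "{}"]) auto
next
  case (Suc k)
  then obtain A where A: "finite A" "card A = k" "A \<subseteq> {-1<..<1}"
    "\<forall>x\<in>A. poly (rodrigues n k) x = 0"
    by auto
  define A' where "A' = insert (-1) (insert 1 A)"
  have "-1 \<notin> A" "1 \<notin> A"
    using A(3) by auto
  then have fin: "finite A'" and card: "card A' = Suc (Suc k)"
    using A(1,2) by (simp_all add: A'_def)
  have roots: "\<And>x. x \<in> A' \<Longrightarrow> poly (rodrigues n k) x = 0"
    using A(4) poly_rodrigues_pm1 Suc.prems by (auto simp: A'_def)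
  have "Min A' = -1"
    unfolding A'_def by (rule Min_eqI) (use A(1,3) in auto)
  moreover have "Max A' = 1"
    unfolding A'_def by (rule Max_eqI) (use A(1,3) in auto)
  moreover obtain B where "finite B" "card B = card A' - 1" "B \<subseteq> {Min A'<..<Max A'} - A'"
    "\<And>z. z \<in> B \<Longrightarrow> poly (pderiv (rodrigues n k)) z = 0"
    using poly_pderiv_roots_between[OF fin roots] by blast
  ultimately show ?case
    using card by (intro exI[of _ B]) (auto simp: rodrigues_Suc)
qed

definition legendre_roots :: "nat \<Rightarrow> real set" where
  "legendre_roots n = {x. poly (rodrigues n n) x = 0}"

lemma
  shows finite_legendre_roots: "finite (legendre_roots n)"
    and card_legendre_roots: "card (legendre_roots n) = n"
    and legendre_roots_subset: "legendre_roots n \<subseteq> {-1<..<1}"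
proof -
  obtain A where A: "finite A" "card A = n" "A \<subseteq> {-1<..<1}"
    "\<forall>x\<in>A. poly (rodrigues n n) x = 0"
    using rodrigues_roots_in_interval[of n n] by auto
  have fin: "finite (legendre_roots n)"
    unfolding legendre_roots_def by (intro poly_roots_finite rodrigues_nonzero) simp
  have "card (legendre_roots n) \<le> n"
    using card_poly_roots_bound[OF rodrigues_nonzero, of n n] degree_rodrigues[of n n]
    by (simp add: legendre_roots_def)
  moreover have "A \<subseteq> legendre_roots n"
    using A(4) by (auto simp: legendre_roots_def)
  ultimately have "legendre_roots n = A"
    using A(2) fin by (metis card_seteq)
  then show "finite (legendre_roots n)" "card (legendre_roots n) = n" "legendre_roots n \<subseteq> {-1<..<1}"
    using A(1-3) by simp_all
qed

lemma legendre_root_in_interval: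
  assumes "y \<in> legendre_roots n"
  shows "-1 < y" "y < 1"
proof -
  have "y \<in> {-1<..<1}"
    using legendre_roots_subset assms by (rule subsetD)
  then show "-1 < y" "y < 1"
    by simp_all
qed

text \<open>The roots are simple: Rolle yields \<open>n - 1\<close> roots of the derivative strictly between
  them, and a root of the derivative at a root would be one too many.\<close>

lemma legendre_root_simple:
  assumes "y \<in> legendre_roots n"
  shows "poly (rodrigues n (Suc n)) y \<noteq> 0"
proof
  assume y: "poly (rodrigues n (Suc n)) y = 0"
  have "n \<noteq> 0"
  proof
    assume "n = 0"
    then have "legendre_roots n = {}"
      using card_legendre_roots[of n] finite_legendre_roots[of n] by simp
    with assms show False
      by simp
  qed
  have "\<And>x. x \<in> legendre_roots n \<Longrightarrow> poly (rodrigues n n) x = 0"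
    by (simp add: legendre_roots_def)
  then obtain B where B: "finite B" "card B = card (legendre_roots n) - 1"
    "B \<subseteq> {Min (legendre_roots n)<..<Max (legendre_roots n)} - legendre_roots n"
    "\<And>z. z \<in> B \<Longrightarrow> poly (pderiv (rodrigues n n)) z = 0"
    using poly_pderiv_roots_between[OF finite_legendre_roots] by blast
  have nz: "rodrigues n (Suc n) \<noteq> 0"
    using \<open>n \<noteq> 0\<close> by (intro rodrigues_nonzero) simp
  have "insert y B \<subseteq> {x. poly (rodrigues n (Suc n)) x = 0}"
    using B(4) y by (auto simp: rodrigues_Suc)
  then have "card (insert y B) \<le> degree (rodrigues n (Suc n))"
    using card_mono[OF poly_roots_finite[OF nz]] card_poly_roots_bound[OF nz] le_trans by blast
  moreover have "y \<notin> B"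
    using B(3) assms by auto
  ultimately show False
    using B(1,2) \<open>n \<noteq> 0\<close> by (simp add: degree_rodrigues card_legendre_roots)
qed

lemma poly_integral_rodrigues_mult:
  assumes "k \<le> n"
  shows "poly_integral (rodrigues n k * s) = (-1) ^ k * poly_integral ([:-1, 0, 1:] ^ n * (pderiv ^^ k) s)"
  using assms
proof (induction k arbitrary: s)
  case 0
  then show ?case by (simp add: rodrigues_def)
next
  case (Suc k)
  have "rodrigues n (Suc k) * s = pderiv (rodrigues n k * s) - rodrigues n k * pderiv s"
    by (simp add: rodrigues_Suc pderiv_mult)
  moreover have "poly_integral (pderiv (rodrigues n k * s)) = 0"
    using poly_rodrigues_pm1 Suc.prems by (simp add: poly_integral_pderiv)
  moreover have "poly_integral (rodrigues n k * pderiv s) =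
      (-1) ^ k * poly_integral ([:-1, 0, 1:] ^ n * (pderiv ^^ Suc k) s)"
    using Suc by (simp add: funpow_swap1)
  ultimately show ?case
    by (simp add: poly_integral_diff)
qed

lemma rodrigues_orthogonal:
  assumes "degree s < n"
  shows "poly_integral (rodrigues n n * s) = 0"
  using poly_integral_rodrigues_mult[of n n s] higher_pderiv_eq_0[OF assms] by simp

lemma higher_pderiv_mult_linear:
  fixes p f :: "real poly"
  assumes "pderiv (pderiv p) = 0"
  shows "(pderiv ^^ Suc k) (p * f) = p * (pderiv ^^ Suc k) f + of_nat (Suc k) * pderiv p * (pderiv ^^ k) f"
proof (induction k)
  case 0
  show ?case
    by (simp add: pderiv_mult algebra_simps del: of_nat_mult_conv_smult)
next
  case (Suc k)
  then show ?case
    using assms by (simp add: pderiv_mult pderiv_add pderiv_of_nat algebra_simps del: of_nat_mult_conv_smult)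
qed

lemma higher_pderiv_mult_quadratic:
  fixes p f :: "real poly"
  assumes "pderiv (pderiv (pderiv p)) = 0"
  shows "(pderiv ^^ Suc (Suc k)) (p * f) = p * (pderiv ^^ Suc (Suc k)) f
    + of_nat (Suc (Suc k)) * pderiv p * (pderiv ^^ Suc k) f
    + of_nat (Suc (Suc k) choose 2) * pderiv (pderiv p) * (pderiv ^^ k) f"
proof (induction k)
  case 0
  show ?case
    by (simp add: pderiv_mult pderiv_add numeral_2_eq_2 algebra_simps del: of_nat_mult_conv_smult)
next
  case (Suc k)
  have "Suc (Suc (Suc k)) choose 2 = (Suc (Suc k) choose 2) + Suc (Suc k)"
    by (simp add: numeral_2_eq_2)
  with Suc show ?case
    using assms by (simp add: pderiv_mult pderiv_add pderiv_of_nat algebra_simps del: of_nat_mult_conv_smult)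
qed

lemma Suc_choose_two_mult_2: "real (Suc n choose 2) * 2 = real (n * (n + 1))"
proof -
  have "even (Suc n * (Suc n - 1))"
    by simp
  then have "(Suc n choose 2) * 2 = Suc n * (Suc n - 1)"
    unfolding choose_two by (rule dvd_div_mult_self)
  then show ?thesis
    by (metis diff_Suc_1 mult.commute of_nat_mult of_nat_numeral Suc_eq_plus1)
qed

text \<open>Legendre's differential equation, obtained by differentiating
  \<open>(x\<^sup>2 - 1) w' = 2 n x w\<close>, \<open>w = (x\<^sup>2 - 1)\<^sup>n\<close>, \<open>n + 1\<close> times.\<close>

lemma rodrigues_ode:
  "(t\<^sup>2 - 1) * poly (rodrigues n (Suc (Suc n))) t + 2 * t * poly (rodrigues n (Suc n)) t
     = real (n * (n + 1)) * poly (rodrigues n n) t"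
proof (cases n)
  case 0
  then show ?thesis
    by (simp add: rodrigues_def)
next
  case (Suc m)
  define x :: "real poly" where "x = [:0, 1:]"
  define q :: "real poly" where "q = [:-1, 0, 1:]"
  define w where "w = q ^ n"
  have dx: "pderiv x = 1"
    by (simp add: x_def pderiv_pCons)
  have dq: "pderiv q = smult 2 x" "pderiv (pderiv q) = [:2:]" "pderiv (pderiv (pderiv q)) = 0"
    by (simp_all add: x_def q_def pderiv_pCons)
  have rw: "(pderiv ^^ k) w = rodrigues n k" for k
    by (simp add: rodrigues_def w_def q_def)
  have dw: "(pderiv ^^ k) (pderiv w) = rodrigues n (Suc k)" for k
    by (simp add: rodrigues_def w_def q_def funpow_swap1)
  have "q * pderiv w = smult (of_nat n) (q * q ^ m * pderiv q)"
    using Suc by (simp add: w_def pderiv_power mult_ac del: power_Suc)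
  also have "q * q ^ m = w"
    using Suc by (simp add: w_def)
  finally have "q * pderiv w = smult (2 * real n) (x * w)"
    by (simp add: dq algebra_simps)
  then have "(pderiv ^^ Suc n) (q * pderiv w) = smult (2 * real n) ((pderiv ^^ Suc n) (x * w))"
    by (simp only: higher_pderiv_smult)
  moreover have "(pderiv ^^ Suc n) (q * pderiv w) = q * rodrigues n (Suc (Suc n))
      + of_nat (Suc n) * pderiv q * rodrigues n (Suc n)
      + of_nat (Suc n choose 2) * pderiv (pderiv q) * rodrigues n n"
    using higher_pderiv_mult_quadratic[OF dq(3), of m "pderiv w"] Suc
    by (simp add: dw del: of_nat_mult_conv_smult funpow.simps)
  moreover have "(pderiv ^^ Suc n) (x * w) = x * rodrigues n (Suc n) + of_nat (Suc n) * pderiv x * rodrigues n n"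
    using higher_pderiv_mult_linear[of x n w] dx by (simp add: rw del: of_nat_mult_conv_smult funpow.simps)
  ultimately have "q * rodrigues n (Suc (Suc n)) + of_nat (Suc n) * pderiv q * rodrigues n (Suc n)
      + of_nat (Suc n choose 2) * pderiv (pderiv q) * rodrigues n n
      = smult (2 * real n) (x * rodrigues n (Suc n) + of_nat (Suc n) * pderiv x * rodrigues n n)"
    by (simp only:)
  from arg_cong[where f = "\<lambda>p. poly p t", OF this[unfolded dq dx]]
  have "(t\<^sup>2 - 1) * poly (rodrigues n (Suc (Suc n))) t + real (Suc n) * (2 * t) * poly (rodrigues n (Suc n)) t
      + real (Suc n choose 2) * 2 * poly (rodrigues n n) t
      = real (2 * n) * (t * poly (rodrigues n (Suc n)) t + real (Suc n) * poly (rodrigues n n) t)"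
    by (simp add: x_def q_def pderiv_pCons power2_eq_square algebra_simps del: of_nat_mult_conv_smult)
  moreover have "real (Suc n choose 2) * 2 = real (n * (n + 1))"
    by (rule Suc_choose_two_mult_2)
  ultimately show ?thesis
    unfolding of_nat_Suc of_nat_mult of_nat_add of_nat_numeral of_nat_1 by algebra
qed

lemma poly_rodrigues_0: "poly (rodrigues n k) 0 = fact k * coeff ([:-1, 0, 1:] ^ n) k"
  by (simp add: rodrigues_def poly_0_coeff_0 coeff_higher_pderiv pochhammer_fact)

lemma coeff_even_power_quadratic:
  assumes "j \<le> n"
  shows "coeff ([:-1, 0, 1:] ^ n) (2 * j) = (-1) ^ (n - j) * real (n choose j)"
proof -
  have "[:-1, 0, 1:] = monom 1 2 + [:-1 :: real:]"
    by (rule poly_eqI) (auto simp: coeff_pCons coeff_monom split: nat.split)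
  also have "coeff (\<dots> ^ n) (2 * j) = (\<Sum>k\<le>n. (-1) ^ (n - k) * real (n choose k) * (if k = j then 1 else 0))"
    by (subst binomial_ring) (simp add: coeff_sum of_nat_poly monom_power poly_const_pow mult_ac coeff_monom)
  also have "\<dots> = (-1) ^ (n - j) * real (n choose j)"
    using assms by (simp add: if_distrib[of "\<lambda>x. _ * x"] cong: if_cong)
  finally show ?thesis .
qed

section \<open>Gauss--Legendre quadrature\<close>

lemma poly_eq_0_if_roots_card_gt_degree:
  fixes p :: "'a :: idom poly"
  assumes "finite A" "degree p < card A" "\<And>x. x \<in> A \<Longrightarrow> poly p x = 0"
  shows "p = 0"
proof (rule ccontr)
  assume "p \<noteq> 0"
  then have "card A \<le> card {x. poly p x = 0}"
    using assms(3) by (intro card_mono poly_roots_finite) auto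
  also have "\<dots> \<le> degree p"
    using \<open>p \<noteq> 0\<close> by (rule card_poly_roots_bound)
  finally show False
    using assms(2) by simp
qed

definition lagrange_basis :: "nat \<Rightarrow> real \<Rightarrow> real poly" where
  "lagrange_basis n y = smult (1 / poly (rodrigues n (Suc n)) y) (rodrigues n n div [:-y, 1:])"

definition gauss_weight :: "nat \<Rightarrow> real \<Rightarrow> real" where
  "gauss_weight n y = poly_integral (lagrange_basis n y)"

lemma rodrigues_linear_factor:
  assumes "y \<in> legendre_roots n"
  shows "rodrigues n n = [:-y, 1:] * (rodrigues n n div [:-y, 1:])"
proof -
  have "[:-y, 1:] dvd rodrigues n n"
    using assms by (simp add: legendre_roots_def poly_eq_0_iff_dvd)
  then show ?thesis
    by (rule dvd_mult_div_cancel[symmetric])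
qed

lemma poly_rodrigues_div_linear_at_root:
  assumes "y \<in> legendre_roots n"
  shows "poly (rodrigues n n div [:-y, 1:]) y = poly (rodrigues n (Suc n)) y"
proof -
  have d: "pderiv [:-y, 1:] = 1"
    by (simp add: pderiv_pCons)
  have "rodrigues n (Suc n) = pderiv ([:-y, 1:] * (rodrigues n n div [:-y, 1:]))"
    using rodrigues_linear_factor[OF assms] by (simp add: rodrigues_Suc)
  also have "\<dots> = rodrigues n n div [:-y, 1:] + [:-y, 1:] * pderiv (rodrigues n n div [:-y, 1:])"
    unfolding pderiv_mult d by simp
  finally show ?thesis
    by simp
qed

lemma poly_lagrange_basis:
  assumes "y \<in> legendre_roots n" "z \<in> legendre_roots n"
  shows "poly (lagrange_basis n y) z = (if z = y then 1 else 0)"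
proof (cases "z = y")
  case True
  then show ?thesis
    using poly_rodrigues_div_linear_at_root[OF assms(1)] legendre_root_simple[OF assms(1)]
    by (simp add: lagrange_basis_def)
next
  case False
  have "0 = poly (rodrigues n n) z"
    using assms(2) by (simp add: legendre_roots_def)
  also have "\<dots> = (z - y) * poly (rodrigues n n div [:-y, 1:]) z"
    by (subst rodrigues_linear_factor[OF assms(1)]) (simp add: algebra_simps)
  finally show ?thesis
    using False by (simp add: lagrange_basis_def)
qed

lemma degree_lagrange_basis:
  assumes "y \<in> legendre_roots n"
  shows "degree (lagrange_basis n y) < n"
proof -
  have "n = degree ([:-y, 1:] * (rodrigues n n div [:-y, 1:]))"
    using rodrigues_linear_factor[OF assms] degree_rodrigues[of n n] by simp
  also have "\<dots> = Suc (degree (rodrigues n n div [:-y, 1:]))"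
    using rodrigues_linear_factor[OF assms] rodrigues_nonzero[of n n] by (subst degree_mult_eq) auto
  finally show ?thesis
    by (simp add: lagrange_basis_def)
qed

lemma lagrange_interpolation:
  assumes "degree r < n"
  shows "(\<Sum>y\<in>legendre_roots n. smult (poly r y) (lagrange_basis n y)) = r"
proof -
  let ?L = "\<Sum>y\<in>legendre_roots n. smult (poly r y) (lagrange_basis n y)"
  have "degree ?L \<le> n - 1"
    using degree_lagrange_basis
    by (intro degree_sum_le finite_legendre_roots) (force intro: order.trans[OF degree_smult_le])
  then have "degree (?L - r) < card (legendre_roots n)"
    using assms degree_diff_le_max[of ?L r] by (simp add: card_legendre_roots)
  moreover have "poly (?L - r) z = 0" if "z \<in> legendre_roots n" for z
  proof -
    have "poly ?L z = (\<Sum>y\<in>legendre_roots n. poly r y * (if z = y then 1 else 0))"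
      using that by (simp add: poly_sum poly_lagrange_basis)
    also have "\<dots> = poly r z"
      using that finite_legendre_roots[of n] by (simp add: if_distrib[of "\<lambda>x. _ * x"] cong: if_cong)
    finally show ?thesis
      by simp
  qed
  ultimately show ?thesis
    using poly_eq_0_if_roots_card_gt_degree[OF finite_legendre_roots] by fastforce
qed

text \<open>Gauss quadrature: dividing by \<open>rodrigues n n\<close> leaves a quotient orthogonal to it and a
  remainder of degree \<open>< n\<close> that agrees with \<open>h\<close> on the nodes.\<close>

lemma gauss_quadrature_exact:
  assumes "degree h < 2 * n"
  shows "(\<Sum>y\<in>legendre_roots n. gauss_weight n y * poly h y) = poly_integral h"
proof -
  define P where "P = rodrigues n n"
  define q where "q = h div P"
  define r where "r = h mod P"
  have P: "P \<noteq> 0" "degree P = n"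
    by (simp_all add: P_def rodrigues_nonzero degree_rodrigues)
  have hqr: "h = P * q + r"
    by (simp add: q_def r_def mult.commute)
  have dr: "degree r < n"
    using degree_mod_less'[OF P(1), of h] assms P(2) by (cases "h mod P = 0") (auto simp: r_def)
  have dq: "degree q < n"
  proof (cases "q = 0")
    case False
    have "degree q + n = degree (P * q)"
      using False P by (simp add: degree_mult_eq)
    also have "\<dots> \<le> max (degree h) (degree r)"
      using degree_diff_le_max[of h r] hqr by simp
    finally show ?thesis
      using assms dr by simp
  qed (use dr in simp)
  have "poly_integral h = poly_integral r"
    using rodrigues_orthogonal[OF dq] by (simp add: hqr poly_integral_add P_def)
  also have "\<dots> = (\<Sum>y\<in>legendre_roots n. poly r y * gauss_weight n y)"
    by (subst lagrange_interpolation[OF dr, symmetric])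
       (simp add: poly_integral_sum poly_integral_smult gauss_weight_def)
  also have "\<dots> = (\<Sum>y\<in>legendre_roots n. gauss_weight n y * poly h y)"
    by (intro sum.cong refl) (simp add: hqr P_def legendre_roots_def)
  finally show ?thesis ..
qed

lemma poly_lagrange_basis_1:
  assumes y: "y \<in> legendre_roots n"
  shows "poly (lagrange_basis n y) 1 = poly (rodrigues n n) 1 / ((1 - y) * poly (rodrigues n (Suc n)) y)"
proof -
  have "y < 1"
    using legendre_root_in_interval[OF y] by simp
  moreover have "poly (rodrigues n n) 1 = (1 - y) * poly (rodrigues n n div [:-y, 1:]) 1"
    by (subst rodrigues_linear_factor[OF y]) (simp add: algebra_simps)
  ultimately show ?thesis
    by (simp add: lagrange_basis_def)
qed

text \<open>Legendre's equation at the node \<open>y\<close> determines the slope of \<open>lagrange_basis n y\<close> there.\<close>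

lemma poly_pderiv_lagrange_basis_at_root:
  assumes y: "y \<in> legendre_roots n"
  shows "poly (pderiv (lagrange_basis n y)) y = y / ((1 - y) * (1 + y))"
proof -
  define a where "a = poly (rodrigues n (Suc n)) y"
  define b where "b = poly (rodrigues n (Suc (Suc n))) y"
  define q where "q = rodrigues n n div [:-y, 1:]"
  have a: "a \<noteq> 0"
    using legendre_root_simple[OF y] by (simp add: a_def)
  have "pderiv [:-y, 1:] = 1"
    by (simp add: pderiv_pCons)
  then have "pderiv (pderiv ([:-y, 1:] * q)) = 2 * pderiv q + [:-y, 1:] * pderiv (pderiv q)"
    unfolding pderiv_mult pderiv_add by (simp add: algebra_simps)
  then have "b = 2 * a * poly (pderiv (lagrange_basis n y)) y"
    using a rodrigues_linear_factor[OF y]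
    by (simp add: b_def a_def q_def lagrange_basis_def pderiv_smult rodrigues_Suc)
  moreover have "(y\<^sup>2 - 1) * b + 2 * y * a = 0"
    using rodrigues_ode[of y n] y by (simp add: a_def b_def legendre_roots_def)
  ultimately have "poly (pderiv (lagrange_basis n y)) y * ((1 - y) * (1 + y)) = y"
    using a by algebra
  moreover have "(1 - y) * (1 + y) \<noteq> 0"
    using legendre_root_in_interval[OF y] by auto
  ultimately show ?thesis
    by (intro eq_divide_imp)
qed

lemma poly_pderiv_linear_mult_square:
  fixes p :: "'a :: idom poly"
  shows "poly (pderiv ([:1, 1:] * p\<^sup>2)) z = poly p z ^ 2 + (1 + z) * (2 * poly p z * poly (pderiv p) z)"
proof -
  have "pderiv [:1, 1 :: 'a:] = 1"
    by (simp add: pderiv_pCons)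
  then have "pderiv ([:1, 1:] * p\<^sup>2) = p\<^sup>2 + [:1, 1:] * smult 2 (p * pderiv p)"
    unfolding pderiv_mult by (simp add: pderiv_power)
  then show ?thesis
    by (simp add: algebra_simps)
qed

lemma gauss_weight_mult_at_root:
  assumes y: "y \<in> legendre_roots n"
  defines "h \<equiv> pderiv ([:1, 1:] * (lagrange_basis n y)\<^sup>2)"
  shows "gauss_weight n y * poly h y = 2 * poly (lagrange_basis n y) 1 ^ 2"
proof -
  have hz: "poly h z = poly (lagrange_basis n y) z ^ 2
      + (1 + z) * (2 * poly (lagrange_basis n y) z * poly (pderiv (lagrange_basis n y)) z)" for z
    unfolding h_def by (rule poly_pderiv_linear_mult_square)
  have "degree ([:1, 1:] * (lagrange_basis n y)\<^sup>2) \<le> 1 + 2 * degree (lagrange_basis n y)"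
    using degree_mult_le[of "[:1, 1 :: real:]" "(lagrange_basis n y)\<^sup>2"]
      degree_power_le[of "lagrange_basis n y" 2] by simp
  then have "degree h < 2 * n"
    using degree_lagrange_basis[OF y] by (simp add: h_def degree_pderiv)
  then have "poly_integral h = (\<Sum>z\<in>legendre_roots n. gauss_weight n z * poly h z)"
    by (rule gauss_quadrature_exact[symmetric])
  also have "\<dots> = gauss_weight n y * poly h y + (\<Sum>z\<in>legendre_roots n - {y}. gauss_weight n z * poly h z)"
    by (rule sum.remove[OF finite_legendre_roots y])
  also have "(\<Sum>z\<in>legendre_roots n - {y}. gauss_weight n z * poly h z) = 0"
    using y by (intro sum.neutral) (auto simp: hz poly_lagrange_basis)
  finally show ?thesis
    by (simp add: h_def poly_integral_pderiv)
qed

lemma gauss_weight_christoffel: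
  assumes y: "y \<in> legendre_roots n"
  shows "gauss_weight n y = 2 * poly (rodrigues n n) 1 ^ 2 / ((1 - y\<^sup>2) * poly (rodrigues n (Suc n)) y ^ 2)"
proof -
  define a where "a = poly (rodrigues n (Suc n)) y"
  have a: "a \<noteq> 0"
    using legendre_root_simple[OF y] by (simp add: a_def)
  have ny: "1 - y \<noteq> 0" "1 + y \<noteq> 0"
    using legendre_root_in_interval[OF y] by auto
  have "y\<^sup>2 < 1"
    using legendre_root_in_interval[OF y] by (simp add: abs_square_less_1 abs_less_iff)
  then have ny2: "1 - y * y \<noteq> 0"
    by (simp add: power2_eq_square)
  have "poly (pderiv ([:1, 1:] * (lagrange_basis n y)\<^sup>2)) y = 1 + (1 + y) * (2 * (y / ((1 - y) * (1 + y))))"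
    unfolding poly_pderiv_linear_mult_square poly_lagrange_basis[OF y y]
      poly_pderiv_lagrange_basis_at_root[OF y] by simp
  also have "\<dots> = (1 + y) / (1 - y)"
    using ny ny2 by (simp add: field_simps)
  finally have "gauss_weight n y * ((1 + y) / (1 - y)) = 2 * (poly (rodrigues n n) 1 / ((1 - y) * a))\<^sup>2"
    using gauss_weight_mult_at_root[OF y] poly_lagrange_basis_1[OF y] by (simp add: a_def)
  then have "gauss_weight n y * (1 + y) * ((1 - y) * a)\<^sup>2 = 2 * poly (rodrigues n n) 1 ^ 2 * (1 - y)"
    using ny a by (simp add: field_simps)
  then have "gauss_weight n y * (((1 - y) * (1 + y)) * a\<^sup>2) = 2 * poly (rodrigues n n) 1 ^ 2"
    using ny(1) by algebra
  moreover have "((1 - y) * (1 + y)) * a\<^sup>2 \<noteq> 0"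
    using ny a by simp
  moreover have "(1 - y) * (1 + y) = 1 - y\<^sup>2"
    by (simp add: algebra_simps power2_eq_square)
  ultimately show ?thesis
    unfolding a_def by (metis eq_divide_imp)
qed

lemma gauss_weight_pos:
  assumes "y \<in> legendre_roots n"
  shows "gauss_weight n y > 0"
proof -
  have "1 - y\<^sup>2 > 0"
    using legendre_root_in_interval[OF assms] by (simp add: abs_square_less_1 abs_less_iff)
  moreover have "poly (rodrigues n (Suc n)) y \<noteq> 0"
    using legendre_root_simple[OF assms] .
  ultimately show ?thesis
    by (simp add: gauss_weight_christoffel[OF assms] poly_rodrigues_1)
qed

section \<open>A Sonin-type bound at the nodes\<close>

definition sonin_numerator :: "nat \<Rightarrow> real \<Rightarrow> real" where
  "sonin_numerator n x = (let P = poly (rodrigues n n) x; P' = poly (rodrigues n (Suc n)) x in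
     (1 - x\<^sup>2)\<^sup>2 * P'\<^sup>2 - (1 - x\<^sup>2) * x * P * P' + ((1 + x\<^sup>2) / 4 + (real n + 1/2)\<^sup>2 * (1 - x\<^sup>2)) * P\<^sup>2)"

text \<open>A variant of Sonin's function for Legendre polynomials; it is increasing on \<open>[0, 1)\<close> and
  decreasing on \<open>(-1, 0]\<close>, and at a root \<open>y\<close> it equals \<open>(1 - y\<^sup>2)\<^sup>3\<^sup>/\<^sup>2 P'(y)\<^sup>2\<close>.\<close>

definition sonin_function :: "nat \<Rightarrow> real \<Rightarrow> real" where
  "sonin_function n x = sonin_numerator n x / sqrt (1 - x\<^sup>2)"

lemma sonin_derivative_identity:
  fixes x P P1 P2 N a :: real
  assumes ode: "(1 - x\<^sup>2) * P2 = 2 * x * P1 - N * P" and a: "a = N + 1/4"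
  shows "(1 - x\<^sup>2) * (-4 * x * (1 - x\<^sup>2) * P1\<^sup>2 + 2 * (1 - x\<^sup>2)\<^sup>2 * P1 * P2 - (1 - 3 * x\<^sup>2) * P * P1
          - (1 - x\<^sup>2) * x * (P1\<^sup>2 + P * P2) + (x / 2 - 2 * a * x) * P\<^sup>2 + 2 * ((1 + x\<^sup>2) / 4 + a * (1 - x\<^sup>2)) * P * P1)
        + x * ((1 - x\<^sup>2)\<^sup>2 * P1\<^sup>2 - (1 - x\<^sup>2) * x * P * P1 + ((1 + x\<^sup>2) / 4 + a * (1 - x\<^sup>2)) * P\<^sup>2)
      = x * P\<^sup>2 / 2"
proof -
  define Z where "Z = (1 - x\<^sup>2) * P2"
  have "(1 - x\<^sup>2) * (-4 * x * (1 - x\<^sup>2) * P1\<^sup>2 + 2 * (1 - x\<^sup>2)\<^sup>2 * P1 * P2 - (1 - 3 * x\<^sup>2) * P * P1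
          - (1 - x\<^sup>2) * x * (P1\<^sup>2 + P * P2) + (x / 2 - 2 * a * x) * P\<^sup>2 + 2 * ((1 + x\<^sup>2) / 4 + a * (1 - x\<^sup>2)) * P * P1)
        + x * ((1 - x\<^sup>2)\<^sup>2 * P1\<^sup>2 - (1 - x\<^sup>2) * x * P * P1 + ((1 + x\<^sup>2) / 4 + a * (1 - x\<^sup>2)) * P\<^sup>2)
      = (1 - x\<^sup>2) * (-4 * x * (1 - x\<^sup>2) * P1\<^sup>2 + 2 * (1 - x\<^sup>2) * P1 * Z - (1 - 3 * x\<^sup>2) * P * P1
          - (1 - x\<^sup>2) * x * P1\<^sup>2 - x * P * Z + (x / 2 - 2 * a * x) * P\<^sup>2 + 2 * ((1 + x\<^sup>2) / 4 + a * (1 - x\<^sup>2)) * P * P1)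
        + x * ((1 - x\<^sup>2)\<^sup>2 * P1\<^sup>2 - (1 - x\<^sup>2) * x * P * P1 + ((1 + x\<^sup>2) / 4 + a * (1 - x\<^sup>2)) * P\<^sup>2)"
    unfolding Z_def by (simp add: algebra_simps power2_eq_square)
  also have "\<dots> = x * P\<^sup>2 / 2"
    unfolding ode[folded Z_def] a by (simp add: field_simps power2_eq_square)
  finally show ?thesis .
qed

lemma sonin_numerator_deriv:
  "\<exists>D. (sonin_numerator n has_real_derivative D) (at x) \<and>
       (1 - x\<^sup>2) * D + x * sonin_numerator n x = x * poly (rodrigues n n) x ^ 2 / 2"
proof -
  define P where "P = poly (rodrigues n n) x"
  define P1 where "P1 = poly (rodrigues n (Suc n)) x"
  define P2 where "P2 = poly (rodrigues n (Suc (Suc n))) x"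
  define a where "a = (real n + 1/2)\<^sup>2"
  define D where "D = -4 * x * (1 - x\<^sup>2) * P1\<^sup>2 + 2 * (1 - x\<^sup>2)\<^sup>2 * P1 * P2 - (1 - 3 * x\<^sup>2) * P * P1
    - (1 - x\<^sup>2) * x * (P1\<^sup>2 + P * P2) + (x / 2 - 2 * a * x) * P\<^sup>2 + 2 * ((1 + x\<^sup>2) / 4 + a * (1 - x\<^sup>2)) * P * P1"
  have dP: "(poly (rodrigues n n) has_real_derivative P1) (at x)"
    using poly_DERIV[of "rodrigues n n" x] by (simp add: P1_def rodrigues_Suc)
  have dP1: "(poly (rodrigues n (Suc n)) has_real_derivative P2) (at x)"
    using poly_DERIV[of "rodrigues n (Suc n)" x] by (simp add: P2_def rodrigues_Suc)
  have "(sonin_numerator n has_real_derivative D) (at x)"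
    unfolding sonin_numerator_def[abs_def] Let_def D_def P_def a_def
    by (rule derivative_eq_intros dP dP1 refl | simp)+
       (simp add: P1_def P2_def algebra_simps power2_eq_square flip: rodrigues_Suc)
  moreover have "(1 - x\<^sup>2) * D + x * sonin_numerator n x = x * P\<^sup>2 / 2"
    unfolding D_def sonin_numerator_def Let_def P_def[symmetric] P1_def[symmetric] a_def[symmetric]
  proof (rule sonin_derivative_identity)
    show "(1 - x\<^sup>2) * P2 = 2 * x * P1 - real (n * (n + 1)) * P"
      using rodrigues_ode[of x n] by (simp add: P_def P1_def P2_def algebra_simps)
    show "a = real (n * (n + 1)) + 1/4"
      by (simp add: a_def power2_eq_square algebra_simps)
  qed
  ultimately show ?thesis
    by (auto simp: P_def)
qed

lemma sonin_function_deriv: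
  assumes "-1 < x" "x < 1"
  shows "(sonin_function n has_real_derivative x * poly (rodrigues n n) x ^ 2 / (2 * sqrt (1 - x\<^sup>2) ^ 3)) (at x)"
proof -
  obtain D where D: "(sonin_numerator n has_real_derivative D) (at x)"
    "(1 - x\<^sup>2) * D + x * sonin_numerator n x = x * poly (rodrigues n n) x ^ 2 / 2"
    using sonin_numerator_deriv by blast
  define s where "s = sqrt (1 - x\<^sup>2)"
  have "1 - x\<^sup>2 > 0"
    using assms by (simp add: abs_square_less_1 abs_less_iff)
  then have s: "s > 0" "s\<^sup>2 = 1 - x\<^sup>2"
    by (simp_all add: s_def)
  have "((\<lambda>x. sqrt (1 - x\<^sup>2)) has_real_derivative inverse s / 2 * (- (2 * x))) (at x)"
    using s by (auto simp: s_def intro!: derivative_eq_intros)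
  then have ds: "((\<lambda>x. sqrt (1 - x\<^sup>2)) has_real_derivative - x / s) (at x)"
    using s by (simp add: field_simps)
  have "(sonin_function n has_real_derivative (D * s - sonin_numerator n x * (- x / s)) / (s * s)) (at x)"
    unfolding sonin_function_def[abs_def] using DERIV_divide[OF D(1) ds] s by (simp add: s_def)
  moreover have "(D * s - sonin_numerator n x * (- x / s)) / (s * s) = (s\<^sup>2 * D + x * sonin_numerator n x) / s ^ 3"
    using s by (simp add: field_simps power2_eq_square power3_eq_cube)
  ultimately show ?thesis
    unfolding s(2) D(2) by (simp add: s_def)
qed

lemma sonin_function_0_le:
  assumes "-1 < y" "y < 1"
  shows "sonin_function n 0 \<le> sonin_function n y"
proof -
  define S' where "S' x = x * poly (rodrigues n n) x ^ 2 / (2 * sqrt (1 - x\<^sup>2) ^ 3)" for x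
  have deriv: "(sonin_function n has_real_derivative S' x) (at x)" if "-1 < x" "x < 1" for x
    unfolding S'_def using that by (rule sonin_function_deriv)
  have sgn: "0 \<le> x * S' x" if "-1 < x" "x < 1" for x
  proof -
    have "1 - x\<^sup>2 > 0"
      using that by (simp add: abs_square_less_1 abs_less_iff)
    moreover have "x * S' x = (x * poly (rodrigues n n) x)\<^sup>2 / (2 * sqrt (1 - x\<^sup>2) ^ 3)"
      by (simp add: S'_def power2_eq_square)
    ultimately show ?thesis
      by simp
  qed
  have "S' 0 = 0"
    by (simp add: S'_def)
  show ?thesis
  proof (cases "0 \<le> y")
    case True
    show ?thesis
    proof (rule deriv_nonneg_imp_mono[of 0 y _ S'])
      show "0 \<le> S' x" if "x \<in> {0..y}" for x
        using sgn[of x] that assms \<open>S' 0 = 0\<close> by (auto simp: zero_le_mult_iff)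
    qed (use deriv assms True in auto)
  next
    case False
    have "- sonin_function n y \<le> - sonin_function n 0"
    proof (rule deriv_nonneg_imp_mono[of y 0 "\<lambda>x. - sonin_function n x" "\<lambda>x. - S' x"])
      show "0 \<le> - S' x" if "x \<in> {y..0}" for x
        using sgn[of x] that assms \<open>S' 0 = 0\<close> by (auto simp: zero_le_mult_iff)
    qed (use deriv assms False in \<open>auto intro: DERIV_minus\<close>)
    then show ?thesis
      by simp
  qed
qed

lemma legendre_root_deriv_lower_bound:
  assumes "y \<in> legendre_roots n"
  shows "poly (rodrigues n (Suc n)) 0 ^ 2 + ((real n + 1/2)\<^sup>2 + 1/4) * poly (rodrigues n n) 0 ^ 2
    \<le> sqrt (1 - y\<^sup>2) ^ 3 * poly (rodrigues n (Suc n)) y ^ 2"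
proof -
  have y: "-1 < y" "y < 1"
    using legendre_root_in_interval[OF assms] by auto
  define s where "s = sqrt (1 - y\<^sup>2)"
  have "1 - y\<^sup>2 > 0"
    using y by (simp add: abs_square_less_1 abs_less_iff)
  then have s: "s > 0" "s\<^sup>2 = 1 - y\<^sup>2"
    by (simp_all add: s_def)
  have "sonin_function n y = (1 - y\<^sup>2)\<^sup>2 * poly (rodrigues n (Suc n)) y ^ 2 / s"
    using assms by (simp add: sonin_function_def sonin_numerator_def legendre_roots_def s_def)
  also have "\<dots> = s ^ 3 * poly (rodrigues n (Suc n)) y ^ 2"
    unfolding s(2)[symmetric] using s(1) by (simp add: field_simps power2_eq_square power3_eq_cube)
  finally have "sonin_function n y = sqrt (1 - y\<^sup>2) ^ 3 * poly (rodrigues n (Suc n)) y ^ 2"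
    by (simp add: s_def)
  moreover have "sonin_function n 0 = poly (rodrigues n (Suc n)) 0 ^ 2 + ((real n + 1/2)\<^sup>2 + 1/4) * poly (rodrigues n n) 0 ^ 2"
    by (simp add: sonin_function_def sonin_numerator_def Let_def algebra_simps)
  ultimately show ?thesis
    using sonin_function_0_le[OF y, of n] by simp
qed

section \<open>Wallis bounds for central binomial coefficients\<close>

definition central_binomial_ratio :: "nat \<Rightarrow> real" where
  "central_binomial_ratio m = fact (2 * m) / (fact m ^ 2 * 4 ^ m)"

lemma central_binomial_ratio_pos: "central_binomial_ratio m > 0"
  by (simp add: central_binomial_ratio_def)

lemma central_binomial_ratio_Suc:
  "central_binomial_ratio (Suc m) = central_binomial_ratio m * (2 * real m + 1) / (2 * real m + 2)"
proof -
  define a where "a = real m + 1"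
  define X where "X = (2 * real m + 1) * fact (2 * m)"
  define Y where "Y = fact m ^ 2 * (4 :: real) ^ m"
  have "a > 0" "Y > 0"
    by (simp_all add: a_def Y_def)
  have "fact (2 * Suc m) = 2 * a * X"
    by (simp add: a_def X_def algebra_simps)
  moreover have "fact (Suc m) ^ 2 * 4 ^ Suc m = a\<^sup>2 * Y * (4 :: real)"
    by (simp add: a_def Y_def algebra_simps power2_eq_square)
  ultimately have "central_binomial_ratio (Suc m) = 2 * a * X / (a\<^sup>2 * Y * 4)"
    by (simp only: central_binomial_ratio_def)
  also have "\<dots> = X / (2 * a * Y)"
    using \<open>a > 0\<close> \<open>Y > 0\<close> by (simp add: field_simps power2_eq_square)
  finally show ?thesis
    by (simp add: central_binomial_ratio_def a_def X_def Y_def field_simps)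
qed

lemma real_central_binomial: "real (2 * m choose m) = central_binomial_ratio m * 4 ^ m"
  by (simp add: binomial_fact central_binomial_ratio_def mult_2 power2_eq_square)

lemma wallis_partial_product_eq:
  "(\<Prod>k=1..m. 4 * real k ^ 2 / (4 * real k ^ 2 - 1)) = 1 / ((2 * real m + 1) * central_binomial_ratio m ^ 2)"
proof (induction m)
  case 0
  then show ?case by (simp add: central_binomial_ratio_def)
next
  case (Suc m)
  then show ?case
    using central_binomial_ratio_pos[of m]
    by (simp add: central_binomial_ratio_Suc field_simps power2_eq_square)
qed

lemma divide_le_divide_if_cross:
  fixes P B Q E :: real
  assumes "0 < B" "0 < E" "P * E \<le> Q * B"
  shows "P / B \<le> Q / E"
  using assms by (simp add: field_simps)

lemma wallis_partial_product_mult_le: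
  fixes f :: "nat \<Rightarrow> real"
  assumes step: "\<And>m. f m \<le> 4 * real (Suc m) ^ 2 / (4 * real (Suc m) ^ 2 - 1) * f (Suc m)"
    and lim: "f \<longlonglongrightarrow> 1"
  shows "(\<Prod>k=1..m. 4 * real k ^ 2 / (4 * real k ^ 2 - 1)) * f m \<le> pi / 2"
proof -
  define W where "W m = (\<Prod>k=1..m. 4 * real k ^ 2 / (4 * real k ^ 2 - 1))" for m
  have inc: "incseq (\<lambda>m. W m * f m)"
  proof (rule incseq_SucI)
    fix m
    have "W m \<ge> 0"
      unfolding W_def wallis_partial_product_eq using central_binomial_ratio_pos[of m] by simp
    then have "W m * f m \<le> W m * (4 * real (Suc m) ^ 2 / (4 * real (Suc m) ^ 2 - 1) * f (Suc m))"
      by (rule mult_left_mono[OF step])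
    then show "W m * f m \<le> W (Suc m) * f (Suc m)"
      by (simp add: W_def mult_ac)
  qed
  have "(\<lambda>m. W m * f m) \<longlonglongrightarrow> pi / 2 * 1"
    unfolding W_def by (intro tendsto_mult wallis lim)
  from incseq_le[OF inc this] show ?thesis
    by (simp add: W_def)
qed

text \<open>The factors \<open>(4 m + 1) (2 m + 1) / (8 m\<^sup>2 + 4 m + 1)\<close> and \<open>(4 m + 3) / (4 m + 2)\<close> tend to
  \<open>1\<close> slowly enough that their products with the Wallis partial products still increase; the
  resulting bounds are exactly what the values of \<open>rodrigues n n\<close> and its derivative at \<open>0\<close>
  require.\<close>

lemma wallis_correction_step_even:
  fixes x :: real
  assumes "x \<ge> 0"
  shows "(4 * x + 1) * (2 * x + 1) / (8 * x\<^sup>2 + 4 * x + 1)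
    \<le> 4 * (x + 1)\<^sup>2 / (4 * (x + 1)\<^sup>2 - 1) * ((4 * (x + 1) + 1) * (2 * (x + 1) + 1) / (8 * (x + 1)\<^sup>2 + 4 * (x + 1) + 1))"
  unfolding times_divide_times_eq
proof (rule divide_le_divide_if_cross)
  show "8 * x\<^sup>2 + 4 * x + 1 > 0" "(4 * (x + 1)\<^sup>2 - 1) * (8 * (x + 1)\<^sup>2 + 4 * (x + 1) + 1) > 0"
    using assms by (auto simp: power2_eq_square algebra_simps intro!: add_pos_nonneg)
  have "(4 * x + 1) * (2 * x + 1) * ((4 * (x + 1)\<^sup>2 - 1) * (8 * (x + 1)\<^sup>2 + 4 * (x + 1) + 1))
      + (2 * x + 3) * (8 * x\<^sup>2 + 12 * x + 7)
      = 4 * (x + 1)\<^sup>2 * ((4 * (x + 1) + 1) * (2 * (x + 1) + 1)) * (8 * x\<^sup>2 + 4 * x + 1)"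
    by (simp add: algebra_simps power2_eq_square)
  moreover have "(2 * x + 3) * (8 * x\<^sup>2 + 12 * x + 7) \<ge> 0"
    using assms by simp
  ultimately show "(4 * x + 1) * (2 * x + 1) * ((4 * (x + 1)\<^sup>2 - 1) * (8 * (x + 1)\<^sup>2 + 4 * (x + 1) + 1))
      \<le> 4 * (x + 1)\<^sup>2 * ((4 * (x + 1) + 1) * (2 * (x + 1) + 1)) * (8 * x\<^sup>2 + 4 * x + 1)"
    by linarith
qed

lemma wallis_correction_step_odd:
  fixes x :: real
  assumes "x \<ge> 0"
  shows "(4 * x + 3) / (4 * x + 2) \<le> 4 * (x + 1)\<^sup>2 / (4 * (x + 1)\<^sup>2 - 1) * ((4 * (x + 1) + 3) / (4 * (x + 1) + 2))"
  unfolding times_divide_times_eq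
proof (rule divide_le_divide_if_cross)
  show "4 * x + 2 > 0" "(4 * (x + 1)\<^sup>2 - 1) * (4 * (x + 1) + 2) > 0"
    using assms by (auto simp: power2_eq_square algebra_simps intro!: add_pos_nonneg)
  have "(4 * x + 3) * ((4 * (x + 1)\<^sup>2 - 1) * (4 * (x + 1) + 2)) + (4 * x + 2)
      = 4 * (x + 1)\<^sup>2 * (4 * (x + 1) + 3) * (4 * x + 2)"
    by (simp add: algebra_simps power2_eq_square)
  then show "(4 * x + 3) * ((4 * (x + 1)\<^sup>2 - 1) * (4 * (x + 1) + 2)) \<le> 4 * (x + 1)\<^sup>2 * (4 * (x + 1) + 3) * (4 * x + 2)"
    using assms by linarith
qed

lemma central_binomial_ratio_lower_even:
  "4 * real m + 1 \<le> pi * central_binomial_ratio m ^ 2 * ((2 * real m + 1/2)\<^sup>2 + 1/4)"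
proof -
  define f where "f k = (4 * real k + 1) * (2 * real k + 1) / (8 * real k ^ 2 + 4 * real k + 1)" for k
  have step: "f k \<le> 4 * real (Suc k) ^ 2 / (4 * real (Suc k) ^ 2 - 1) * f (Suc k)" for k
    using wallis_correction_step_even[of "real k"] by (simp add: f_def ac_simps)
  have "f \<longlonglongrightarrow> 1"
    unfolding f_def by real_asymp
  then have "(\<Prod>k=1..m. 4 * real k ^ 2 / (4 * real k ^ 2 - 1)) * f m \<le> pi / 2"
    by (rule wallis_partial_product_mult_le[OF step])
  moreover have eq: "(\<Prod>k=1..m. 4 * real k ^ 2 / (4 * real k ^ 2 - 1)) * f m
      = (4 * real m + 1) / (central_binomial_ratio m ^ 2 * (8 * real m ^ 2 + 4 * real m + 1))"
  proof -
    have cancel: "1 / (a * c) * (b * a / p) = b / (c * p)" if "a > 0" for a b c p :: real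
      using that by (simp add: field_simps)
    show ?thesis
      unfolding wallis_partial_product_eq f_def by (rule cancel) simp
  qed
  ultimately have "(4 * real m + 1) / (central_binomial_ratio m ^ 2 * (8 * real m ^ 2 + 4 * real m + 1)) \<le> pi / 2"
    by (simp only: eq)
  moreover have "central_binomial_ratio m ^ 2 * (8 * real m ^ 2 + 4 * real m + 1) > 0"
  proof -
    have "0 \<le> 8 * real m ^ 2 + 4 * real m"
      by simp
    then have "8 * real m ^ 2 + 4 * real m + 1 > 0"
      by linarith
    then show ?thesis
      using central_binomial_ratio_pos[of m] by simp
  qed
  ultimately show ?thesis
    by (simp add: divide_le_eq power2_eq_square algebra_simps)
qed

lemma central_binomial_ratio_lower_odd:
  "4 * real m + 3 \<le> pi * central_binomial_ratio m ^ 2 * (2 * real m + 1)\<^sup>2"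
proof -
  define f where "f k = (4 * real k + 3) / (4 * real k + 2)" for k
  have step: "f k \<le> 4 * real (Suc k) ^ 2 / (4 * real (Suc k) ^ 2 - 1) * f (Suc k)" for k
    using wallis_correction_step_odd[of "real k"] by (simp add: f_def ac_simps)
  have "f \<longlonglongrightarrow> 1"
    unfolding f_def by real_asymp
  then have "(\<Prod>k=1..m. 4 * real k ^ 2 / (4 * real k ^ 2 - 1)) * f m \<le> pi / 2"
    by (rule wallis_partial_product_mult_le[OF step])
  moreover have eq: "(\<Prod>k=1..m. 4 * real k ^ 2 / (4 * real k ^ 2 - 1)) * f m
      = (4 * real m + 3) / (central_binomial_ratio m ^ 2 * (2 * real m + 1) * (4 * real m + 2))"
    unfolding wallis_partial_product_eq f_def by (simp add: mult_ac)
  ultimately have "(4 * real m + 3) / (central_binomial_ratio m ^ 2 * (2 * real m + 1) * (4 * real m + 2)) \<le> pi / 2"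
    by (simp only: eq)
  moreover have "central_binomial_ratio m ^ 2 * (2 * real m + 1) * (4 * real m + 2) > 0"
    using central_binomial_ratio_pos[of m] by simp
  ultimately show ?thesis
    by (simp add: divide_le_eq power2_eq_square algebra_simps)
qed

lemma poly_rodrigues_0_even:
  assumes "n = 2 * m"
  shows "poly (rodrigues n n) 0 = (-1) ^ m * (fact n * (central_binomial_ratio m * 4 ^ m))"
  using coeff_even_power_quadratic[of m n] assms by (simp add: poly_rodrigues_0 real_central_binomial)

lemma poly_rodrigues_Suc_0_odd:
  assumes n: "n = 2 * m + 1"
  shows "poly (rodrigues n (Suc n)) 0
    = (-1) ^ m * (2 * fact n * (2 * real m + 1) * (central_binomial_ratio m * 4 ^ m))"
proof -
  define B where "B = real (Suc (2 * m) choose Suc m)"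
  have "real (Suc m * (Suc (2 * m) choose Suc m)) = real (Suc (2 * m) * (2 * m choose m))"
    by (simp only: Suc_times_binomial)
  then have "real (Suc m) * B = real (Suc (2 * m)) * real (2 * m choose m)"
    unfolding B_def of_nat_mult .
  then have B: "real (Suc m) * B = (2 * real m + 1) * (central_binomial_ratio m * 4 ^ m)"
    unfolding real_central_binomial by simp
  have "poly (rodrigues n (Suc n)) 0 = fact (Suc n) * ((-1) ^ m * B)"
    using coeff_even_power_quadratic[of "Suc m" n] n by (simp add: B_def poly_rodrigues_0 del: binomial_Suc_Suc)
  also have "fact (Suc n) = 2 * real (Suc m) * fact n"
    using n by simp
  also have "2 * real (Suc m) * fact n * ((-1) ^ m * B) = (-1) ^ m * (2 * fact n * (real (Suc m) * B))"
    by (simp only: mult_ac)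
  finally show ?thesis
    unfolding B by (simp only: mult_ac)
qed

lemma rodrigues_at_0_lower_bound:
  "(2 * real n + 1) * (fact n * 2 ^ n)\<^sup>2 / pi
    \<le> poly (rodrigues n (Suc n)) 0 ^ 2 + ((real n + 1/2)\<^sup>2 + 1/4) * poly (rodrigues n n) 0 ^ 2"
proof -
  obtain m where "n = 2 * m \<or> n = 2 * m + 1"
    by (metis evenE oddE)
  moreover define c where "c = central_binomial_ratio m"
  moreover define K where "K = fact n ^ 2 * 16 ^ m / pi"
  moreover have sq: "((-1 :: real) ^ m)\<^sup>2 = 1" "((4 :: real) ^ m)\<^sup>2 = 16 ^ m"
    by (simp_all flip: power_mult_distrib power_mult add: power2_eq_square)
  moreover have "K \<ge> 0"
    by (simp add: K_def)
  ultimately consider "n = 2 * m" | "n = 2 * m + 1"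
    by blast
  then show ?thesis
  proof cases
    case 1
    then have "((real n + 1/2)\<^sup>2 + 1/4) * poly (rodrigues n n) 0 ^ 2 = pi * c\<^sup>2 * ((2 * real m + 1/2)\<^sup>2 + 1/4) * K"
      using sq by (simp add: poly_rodrigues_0_even c_def K_def power_mult_distrib)
    moreover have "(2 * real n + 1) * (fact n * 2 ^ n)\<^sup>2 / pi = (4 * real m + 1) * K"
      using 1 sq by (simp add: K_def power_mult power_mult_distrib)
    moreover have "(4 * real m + 1) * K \<le> pi * c\<^sup>2 * ((2 * real m + 1/2)\<^sup>2 + 1/4) * K"
      using central_binomial_ratio_lower_even[of m] \<open>K \<ge> 0\<close> unfolding c_def by (rule mult_right_mono)
    ultimately show ?thesis
      using zero_le_power2[of "poly (rodrigues n (Suc n)) 0"] by linarith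
  next
    case 2
    then have "poly (rodrigues n (Suc n)) 0 ^ 2 = pi * c\<^sup>2 * (2 * real m + 1)\<^sup>2 * (4 * K)"
      using sq by (simp add: poly_rodrigues_Suc_0_odd c_def K_def power_mult_distrib)
    moreover have "(2 * real n + 1) * (fact n * 2 ^ n)\<^sup>2 / pi = (4 * real m + 3) * (4 * K)"
      using 2 sq by (simp add: K_def power_mult power_mult_distrib)
    moreover have "(4 * real m + 3) * (4 * K) \<le> pi * c\<^sup>2 * (2 * real m + 1)\<^sup>2 * (4 * K)"
      using central_binomial_ratio_lower_odd[of m] \<open>K \<ge> 0\<close> unfolding c_def by (intro mult_right_mono) simp_all
    moreover have "0 \<le> ((real n + 1/2)\<^sup>2 + 1/4) * poly (rodrigues n n) 0 ^ 2"
      by simp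
    ultimately show ?thesis
      by linarith
  qed
qed

section \<open>The binomial series of the inverse square root and the arcsine series\<close>

lemma central_binomial_ratio_le_1: "central_binomial_ratio k \<le> 1"
proof (induction k)
  case 0
  then show ?case by (simp add: central_binomial_ratio_def)
next
  case (Suc k)
  have "(2 * real k + 1) / (2 * real k + 2) \<le> 1"
    by simp
  then have "central_binomial_ratio k * (2 * real k + 1) / (2 * real k + 2) \<le> central_binomial_ratio k"
    using central_binomial_ratio_pos[of k] by (simp add: mult_left_le divide_le_eq)
  then show ?case
    unfolding central_binomial_ratio_Suc using Suc.IH by linarith
qed

lemma gbinomial_minus_half: "((-1/2 :: real) gchoose k) * (-1) ^ k = central_binomial_ratio k"
proof (induction k)
  case 0
  then show ?case by (simp add: central_binomial_ratio_def)
next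
  case (Suc k)
  have "((-1/2 :: real) gchoose Suc k) * (-1) ^ Suc k
      = (((-1/2) gchoose k) * (-1) ^ k) * ((1/2 + real k) / (real k + 1))"
    by (simp add: gbinomial_Suc_rec algebra_simps)
  also have "\<dots> = central_binomial_ratio (Suc k)"
    unfolding Suc.IH central_binomial_ratio_Suc by (simp add: field_simps)
  finally show ?case .
qed

lemma inv_sqrt_sums:
  assumes "\<bar>x\<bar> < (1 :: real)"
  shows "(\<lambda>k. central_binomial_ratio k * x ^ (2 * k)) sums (1 / sqrt (1 - x\<^sup>2))"
proof -
  have "x\<^sup>2 < 1"
    using assms by (simp add: abs_square_less_1)
  then have "\<bar>- (x\<^sup>2)\<bar> < 1"
    by simp
  then have "(\<lambda>k. ((-1/2) gchoose k) * (- (x\<^sup>2)) ^ k) sums (1 + - (x\<^sup>2)) powr (-1/2)"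
    by (rule gen_binomial_real)
  moreover have "((-1/2) gchoose k) * (- (x\<^sup>2)) ^ k = central_binomial_ratio k * x ^ (2 * k)" for k
  proof -
    have "(- (x\<^sup>2)) ^ k = (-1) ^ k * x ^ (2 * k)"
      unfolding power_minus[of "x\<^sup>2" k] power_mult[of x 2 k] ..
    then show ?thesis
      using gbinomial_minus_half[of k] by (simp add: mult_ac)
  qed
  moreover have "(1 + - (x\<^sup>2)) powr (-1/2) = 1 / sqrt (1 - x\<^sup>2)"
    using \<open>x\<^sup>2 < 1\<close> powr_minus_divide[of "1 - x\<^sup>2" "1/2"] by (simp add: powr_half_sqrt)
  ultimately show ?thesis
    by simp
qed

text \<open>Coefficients of the Maclaurin series \<open>arcsin x = \<Sum>n. arcsin_coeff n * x ^ Suc n\<close>.\<close>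

definition arcsin_coeff :: "nat \<Rightarrow> real" where
  "arcsin_coeff n = (if even n then central_binomial_ratio (n div 2) / real (Suc n) else 0)"

lemma arcsin_coeff_nonneg: "arcsin_coeff n \<ge> 0"
  using central_binomial_ratio_pos[of "n div 2"] by (simp add: arcsin_coeff_def)

lemma arcsin_coeff_le_1: "arcsin_coeff n \<le> 1"
proof -
  have "central_binomial_ratio (n div 2) / real (Suc n) \<le> central_binomial_ratio (n div 2)"
    using central_binomial_ratio_pos[of "n div 2"] by (simp add: divide_le_eq)
  then show ?thesis
    using central_binomial_ratio_le_1[of "n div 2"] by (simp add: arcsin_coeff_def)
qed

lemma arcsin_coeff_deriv_sums:
  assumes "\<bar>x\<bar> < (1 :: real)"
  shows "(\<lambda>n. arcsin_coeff n * real (Suc n) * x ^ n) sums (1 / sqrt (1 - x\<^sup>2))"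
proof -
  define h where "h n = arcsin_coeff n * real (Suc n) * x ^ n" for n
  have "strict_mono (\<lambda>k :: nat. 2 * k)"
    by (rule strict_monoI) simp
  moreover have "h n = 0" if "n \<notin> range (\<lambda>k :: nat. 2 * k)" for n
    using that by (auto simp: h_def arcsin_coeff_def elim!: evenE)
  ultimately have "(\<lambda>k. h (2 * k)) sums (1 / sqrt (1 - x\<^sup>2)) \<longleftrightarrow> h sums (1 / sqrt (1 - x\<^sup>2))"
    by (rule sums_mono_reindex)
  moreover have "(\<lambda>k. h (2 * k)) = (\<lambda>k. central_binomial_ratio k * x ^ (2 * k))"
    by (simp add: h_def arcsin_coeff_def)
  ultimately have "h sums (1 / sqrt (1 - x\<^sup>2))"
    using inv_sqrt_sums[OF assms] by simp
  then show ?thesis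
    by (simp add: h_def[abs_def])
qed

lemma arcsin_sums:
  assumes "-1 < x" "x < (1 :: real)"
  shows "(\<lambda>n. arcsin_coeff n * x ^ Suc n) sums arcsin x"
proof -
  define F where "F y = (\<Sum>n. arcsin_coeff n * y ^ Suc n)" for y :: real
  have summable: "summable (\<lambda>n. arcsin_coeff n * y ^ Suc n)" if "\<bar>y\<bar> < 1" for y
  proof (rule summable_comparison_test')
    show "summable (\<lambda>n. \<bar>y\<bar> * \<bar>y\<bar> ^ n)"
      using that by (intro summable_mult summable_geometric) simp
    show "norm (arcsin_coeff n * y ^ Suc n) \<le> \<bar>y\<bar> * \<bar>y\<bar> ^ n" for n
      using arcsin_coeff_nonneg[of n] arcsin_coeff_le_1[of n]
      by (simp add: abs_mult power_abs mult_left_le_one_le)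
  qed
  have "((\<lambda>y. F y - arcsin y) has_real_derivative 0) (at y)" if "y \<in> {-1<..<1}" for y
  proof -
    have "(F has_real_derivative (\<Sum>n. arcsin_coeff n * real (Suc n) * y ^ n)) (at y)"
      unfolding F_def[abs_def]
    proof (rule DERIV_power_series')
      fix z :: real
      assume "z \<in> {-1<..<1}"
      then have "\<bar>z\<bar> < 1"
        by auto
      then show "summable (\<lambda>n. arcsin_coeff n * real (Suc n) * z ^ n)"
        using arcsin_coeff_deriv_sums sums_summable by blast
    qed (use that in auto)
    then have "((\<lambda>y. F y - arcsin y) has_real_derivative (1 / sqrt (1 - y\<^sup>2) - inverse (sqrt (1 - y\<^sup>2)))) (at y)"
      using that arcsin_coeff_deriv_sums[of y] by (intro DERIV_diff DERIV_arcsin) (auto simp: sums_iff)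
    then show ?thesis
      by (simp add: divide_inverse)
  qed
  then have "F x - arcsin x = F 0 - arcsin 0"
    by (intro DERIV_isconst3[of "-1" 1 x 0]) (use assms in auto)
  then have "F x = arcsin x"
    by (simp add: F_def)
  moreover have "\<bar>x\<bar> < 1"
    using assms by auto
  then have "(\<lambda>n. arcsin_coeff n * x ^ Suc n) sums F x"
    unfolding F_def by (rule summable_sums[OF summable])
  ultimately show ?thesis
    by simp
qed

lemma arcsin_coeff_partial_sum_even:
  "(\<Sum>n<2 * N. arcsin_coeff n) = (\<Sum>k<N. central_binomial_ratio k / (2 * real k + 1))"
proof (induction N)
  case (Suc N)
  have "(\<Sum>n<2 * Suc N. arcsin_coeff n) = (\<Sum>n<2 * N. arcsin_coeff n) + arcsin_coeff (2 * N) + arcsin_coeff (Suc (2 * N))"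
    by (simp add: numeral_2_eq_2)
  also have "arcsin_coeff (2 * N) = central_binomial_ratio N / (2 * real N + 1)"
    by (simp add: arcsin_coeff_def)
  also have "arcsin_coeff (Suc (2 * N)) = 0"
    by (simp add: arcsin_coeff_def)
  finally show ?case
    using Suc.IH by simp
qed simp

text \<open>Abel's theorem at \<open>x = 1\<close> in the weak form needed: the partial sums of
  \<open>\<Sum>k. central_binomial_ratio k / (2k + 1)\<close> come arbitrarily close to \<open>arcsin 1 = \<pi>/2\<close>,
  because all terms are nonnegative.\<close>

lemma central_binomial_ratio_series_lower:
  assumes "e > 0"
  shows "\<exists>N. pi - e < (\<Sum>k<N. 2 * central_binomial_ratio k / (2 * real k + 1))"
proof -
  define t where "t = pi / 2 - min e 1 / 4"
  have t: "0 < t" "t < pi / 2" "pi / 2 - e / 2 < t"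
    using assms pi_gt3 by (auto simp: t_def min_def)
  define x where "x = sin t"
  have x: "0 < x" "x < 1"
    using t sin_gt_zero[of t] sin_monotone_2pi[of t "pi / 2"] by (auto simp: x_def)
  have "arcsin x = t"
    unfolding x_def by (rule arcsin_sin) (use t in auto)
  then have "(\<lambda>M. \<Sum>n<M. arcsin_coeff n * x ^ Suc n) \<longlonglongrightarrow> t"
    using arcsin_sums[of x] x by (simp add: sums_def)
  from order_tendstoD(1)[OF this t(3)] obtain M where M: "pi / 2 - e / 2 < (\<Sum>n<M. arcsin_coeff n * x ^ Suc n)"
    by (auto simp: eventually_sequentially)
  also have "\<dots> \<le> (\<Sum>n<M. arcsin_coeff n)"
    by (intro sum_mono mult_left_le power_le_one) (use x arcsin_coeff_nonneg in auto)
  also have "\<dots> \<le> (\<Sum>n<2 * M. arcsin_coeff n)"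
    by (rule sum_mono2) (auto simp: arcsin_coeff_nonneg)
  finally have "pi - e < 2 * (\<Sum>k<M. central_binomial_ratio k / (2 * real k + 1))"
    unfolding arcsin_coeff_partial_sum_even by simp
  then show ?thesis
    by (auto simp: sum_distrib_left)
qed

section \<open>The quadrature of the inverse square root\<close>

definition quadrature_inv_sqrt :: "nat \<Rightarrow> real" where
  "quadrature_inv_sqrt n = (\<Sum>y\<in>legendre_roots n. gauss_weight n y / sqrt (1 - y\<^sup>2))"

lemma partial_sum_le_quadrature_inv_sqrt:
  assumes "N \<le> n"
  shows "(\<Sum>k<N. 2 * central_binomial_ratio k / (2 * real k + 1)) \<le> quadrature_inv_sqrt n"
proof -
  define p where "p = (\<Sum>k<N. monom (central_binomial_ratio k) (2 * k))"
  have "degree p \<le> 2 * (N - 1)"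
    unfolding p_def by (rule degree_sum_le) (auto intro: order.trans[OF degree_monom_le])
  then have "degree p < 2 * n \<or> N = 0"
    using assms by auto
  then have "poly_integral p = (\<Sum>y\<in>legendre_roots n. gauss_weight n y * poly p y)"
    using gauss_quadrature_exact[of p n] by (auto simp: p_def)
  moreover have "poly_integral p = (\<Sum>k<N. 2 * central_binomial_ratio k / (2 * real k + 1))"
    unfolding p_def poly_integral_sum poly_integral_monom by (intro sum.cong refl) (simp add: field_simps)
  moreover have "gauss_weight n y * poly p y \<le> gauss_weight n y / sqrt (1 - y\<^sup>2)"
    if y: "y \<in> legendre_roots n" for y
  proof -
    have "\<bar>y\<bar> < 1"
      using legendre_root_in_interval[OF y] by auto
    then have sums: "(\<lambda>k. central_binomial_ratio k * y ^ (2 * k)) sums (1 / sqrt (1 - y\<^sup>2))"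
      by (rule inv_sqrt_sums)
    have "(\<Sum>k<N. central_binomial_ratio k * y ^ (2 * k)) \<le> (\<Sum>k. central_binomial_ratio k * y ^ (2 * k))"
      by (rule sum_le_suminf)
         (use sums less_imp_le[OF central_binomial_ratio_pos] in \<open>auto simp: sums_iff power_mult intro!: mult_nonneg_nonneg\<close>)
    also have "(\<Sum>k. central_binomial_ratio k * y ^ (2 * k)) = 1 / sqrt (1 - y\<^sup>2)"
      using sums by (simp add: sums_iff)
    also have "(\<Sum>k<N. central_binomial_ratio k * y ^ (2 * k)) = poly p y"
      by (simp add: p_def poly_sum poly_monom)
    finally have "gauss_weight n y * poly p y \<le> gauss_weight n y * (1 / sqrt (1 - y\<^sup>2))"
      using gauss_weight_pos[OF y] by (intro mult_left_mono) auto
    then show ?thesis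
      by simp
  qed
  then have "(\<Sum>y\<in>legendre_roots n. gauss_weight n y * poly p y) \<le> quadrature_inv_sqrt n"
    unfolding quadrature_inv_sqrt_def by (rule sum_mono)
  ultimately show ?thesis
    by simp
qed

lemma quadrature_inv_sqrt_ge_2: "n \<ge> 1 \<Longrightarrow> quadrature_inv_sqrt n \<ge> 2"
  using partial_sum_le_quadrature_inv_sqrt[of 1 n] by (simp add: central_binomial_ratio_def)

lemma gauss_weight_div_sqrt_le:
  assumes y: "y \<in> legendre_roots n"
  shows "gauss_weight n y / sqrt (1 - y\<^sup>2) \<le> 2 * pi / (2 * real n + 1)"
proof -
  define s where "s = sqrt (1 - y\<^sup>2)"
  define a where "a = poly (rodrigues n (Suc n)) y"
  define P :: real where "P = fact n * 2 ^ n"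
  have "1 - y\<^sup>2 > 0"
    using legendre_root_in_interval[OF y] by (simp add: abs_square_less_1 abs_less_iff)
  then have s: "s > 0" "s\<^sup>2 = 1 - y\<^sup>2"
    by (simp_all add: s_def)
  have a: "a \<noteq> 0"
    using legendre_root_simple[OF y] by (simp add: a_def)
  have P: "P > 0"
    by (simp add: P_def)
  have key: "(2 * real n + 1) * P\<^sup>2 / pi \<le> s ^ 3 * a\<^sup>2"
    using rodrigues_at_0_lower_bound[of n] legendre_root_deriv_lower_bound[OF y]
    unfolding P_def s_def a_def by linarith
  have "gauss_weight n y / s = 2 * P\<^sup>2 / (s ^ 3 * a\<^sup>2)"
    unfolding gauss_weight_christoffel[OF y] poly_rodrigues_1 s(2)[symmetric]
    using s a by (simp add: P_def a_def field_simps power2_eq_square power3_eq_cube)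
  also have "\<dots> \<le> 2 * P\<^sup>2 / ((2 * real n + 1) * P\<^sup>2 / pi)"
    using key P s a by (intro divide_left_mono) (auto intro!: mult_pos_pos divide_pos_pos)
  also have "\<dots> = 2 * pi / (2 * real n + 1)"
  proof -
    have "2 * P\<^sup>2 / (d * P\<^sup>2 / pi) = 2 * pi / d" if "d > 0" for d
      using P that by (simp add: field_simps)
    then show ?thesis
      by simp
  qed
  finally show ?thesis
    by (simp add: s_def)
qed

lemma quadrature_inv_sqrt_le: "quadrature_inv_sqrt n \<le> 2 * real n * pi / (2 * real n + 1)"
proof -
  have "quadrature_inv_sqrt n \<le> (\<Sum>y\<in>legendre_roots n. 2 * pi / (2 * real n + 1))"
    unfolding quadrature_inv_sqrt_def by (intro sum_mono gauss_weight_div_sqrt_le)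
  then show ?thesis
    by (simp add: card_legendre_roots mult_ac)
qed

lemma quadrature_inv_sqrt_tendsto: "quadrature_inv_sqrt \<longlonglongrightarrow> pi"
proof (rule LIMSEQ_I)
  fix r :: real
  assume "r > 0"
  then obtain N where N: "pi - r < (\<Sum>k<N. 2 * central_binomial_ratio k / (2 * real k + 1))"
    using central_binomial_ratio_series_lower by blast
  have "norm (quadrature_inv_sqrt n - pi) < r" if "n \<ge> N" for n
  proof -
    have "2 * real n * pi / (2 * real n + 1) \<le> pi"
      by (simp add: field_simps)
    then show ?thesis
      using N partial_sum_le_quadrature_inv_sqrt[OF that] quadrature_inv_sqrt_le[of n] by simp
  qed
  then show "\<exists>no. \<forall>n\<ge>no. norm (quadrature_inv_sqrt n - pi) < r"
    by blast
qed

section \<open>The Gauss--Legendre distribution\<close>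

lemma poly_legendre_shift: "poly (legendre_shift n) t = poly (rodrigues n n) (2 * t - 1)"
  by (simp add: legendre_shift_def rodrigues_def poly_pcompose algebra_simps)

lemma poly_pderiv_legendre_shift:
  "poly (pderiv (legendre_shift n)) t = 2 * poly (rodrigues n (Suc n)) (2 * t - 1)"
  by (simp add: legendre_shift_def pderiv_pcompose poly_pcompose pderiv_pCons algebra_simps
      flip: rodrigues_def rodrigues_Suc)

lemma GL_support_eq: "GL_support n = (\<lambda>y. (y + 1) / 2) ` legendre_roots n"
proof (intro equalityI subsetI)
  fix t
  assume "t \<in> GL_support n"
  then have "2 * t - 1 \<in> legendre_roots n" "t = ((2 * t - 1) + 1) / 2"
    by (simp_all add: GL_support_def legendre_roots_def poly_legendre_shift)
  then show "t \<in> (\<lambda>y. (y + 1) / 2) ` legendre_roots n"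
    by blast
qed (auto simp: GL_support_def legendre_roots_def poly_legendre_shift add_divide_distrib)

lemma GL_weight_eq:
  assumes y: "y \<in> legendre_roots n"
  shows "GL_weight n ((y + 1) / 2) = gauss_weight n y / sqrt (1 - y\<^sup>2) / poly (rodrigues n n) 1 ^ 2"
proof -
  define s where "s = sqrt (1 - y\<^sup>2)"
  define a where "a = poly (rodrigues n (Suc n)) y"
  have "1 - y\<^sup>2 > 0"
    using legendre_root_in_interval[OF y] by (simp add: abs_square_less_1 abs_less_iff)
  then have s: "s > 0" "s\<^sup>2 = 1 - y\<^sup>2"
    by (simp_all add: s_def)
  have a: "a \<noteq> 0"
    using legendre_root_simple[OF y] by (simp add: a_def)
  have t: "(y + 1) / 2 * (1 - (y + 1) / 2) = s\<^sup>2 / 4"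
    unfolding s(2) by (simp add: field_simps power2_eq_square)
  have "s\<^sup>2 / 4 = (s / 2) powr 2"
    using s(1) by (simp add: powr_numeral power_divide)
  then have "(s\<^sup>2 / 4) powr (3/2) = (s / 2) powr 3"
    by (simp add: powr_powr)
  also have "\<dots> = (s / 2) ^ 3"
    using s(1) by (simp add: powr_numeral)
  finally have "(s\<^sup>2 / 4) powr (3/2) = (s / 2) ^ 3" .
  moreover have "poly (pderiv (legendre_shift n)) ((y + 1) / 2) = 2 * a"
    by (simp add: poly_pderiv_legendre_shift a_def add_divide_distrib)
  ultimately have "GL_weight n ((y + 1) / 2) = 1 / ((s / 2) ^ 3 * (2 * a)\<^sup>2)"
    unfolding GL_weight_def t by (simp only:)
  also have "\<dots> = 2 / (s\<^sup>2 * s * a\<^sup>2)"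
    using s(1) a by (simp add: field_simps power2_eq_square power3_eq_cube)
  also have "\<dots> = gauss_weight n y / s / poly (rodrigues n n) 1 ^ 2"
    unfolding gauss_weight_christoffel[OF y] s(2)[symmetric] a_def[symmetric]
    using s(1) a by (simp add: poly_rodrigues_1 field_simps power2_eq_square)
  finally show ?thesis
    by (simp add: s_def)
qed

lemma GL_E_eq:
  "GL_E (2 * n) g =
    (\<Sum>y\<in>legendre_roots n. gauss_weight n y / sqrt (1 - y\<^sup>2) * g ((y + 1) / 2)) / quadrature_inv_sqrt n"
proof -
  have inj: "inj_on (\<lambda>y :: real. (y + 1) / 2) (legendre_roots n)"
    by (rule inj_onI) simp
  define P where "P = poly (rodrigues n n) 1 ^ 2"
  have "P > 0"
    by (simp add: P_def poly_rodrigues_1)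
  have "(\<Sum>p\<in>GL_support n. GL_weight n p * h p) =
      (\<Sum>y\<in>legendre_roots n. gauss_weight n y / sqrt (1 - y\<^sup>2) * h ((y + 1) / 2)) / P" for h
    unfolding GL_support_eq sum.reindex[OF inj] sum_divide_distrib
    by (intro sum.cong refl) (simp add: GL_weight_eq P_def)
  from this[of g] this[of "\<lambda>_. 1"] show ?thesis
    using \<open>P > 0\<close> by (simp add: GL_E_def quadrature_inv_sqrt_def)
qed

definition bernstein_monomial :: "nat \<Rightarrow> nat \<Rightarrow> real poly" where
  "bernstein_monomial l x = [:0, 1:] ^ x * [:1, -1:] ^ (l - x)"

lemma degree_bernstein_monomial:
  assumes "x \<le> l"
  shows "degree (bernstein_monomial l x) \<le> l"
proof -
  have "degree (bernstein_monomial l x) \<le> degree ([:0, 1 :: real:] ^ x) + degree ([:1, -1 :: real:] ^ (l - x))"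
    unfolding bernstein_monomial_def by (rule degree_mult_le)
  also have "\<dots> \<le> x + (l - x)"
    by (intro add_mono) (auto intro: order.trans[OF degree_power_le])
  finally show ?thesis
    using assms by simp
qed

lemma fLX_eq_sqrt_mult_pderiv:
  assumes t: "0 < t" "t < 1" and "x < l"
  shows "fLX l x t = sqrt (t * (1 - t)) * poly (pderiv (bernstein_monomial l x)) t"
proof -
  obtain k where k: "l - x = Suc k"
    using \<open>x < l\<close> by (metis Suc_diff_Suc)
  have sqrt_mult: "u * sqrt ((1 - u) / u) = sqrt (u * (1 - u))" if "0 < u" for u :: real
  proof -
    have "u * sqrt ((1 - u) / u) = sqrt (u\<^sup>2) * sqrt ((1 - u) / u)"
      using that by simp
    also have "\<dots> = sqrt (u\<^sup>2 * ((1 - u) / u))"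
      by (rule real_sqrt_mult[symmetric])
    also have "u\<^sup>2 * ((1 - u) / u) = u * (1 - u)"
      using that by (simp add: power2_eq_square)
    finally show ?thesis .
  qed
  have deriv: "poly (pderiv (bernstein_monomial l x)) t
      = real x * t ^ (x - 1) * (1 - t) ^ (l - x) - real (l - x) * t ^ x * (1 - t) ^ k"
    unfolding bernstein_monomial_def pderiv_mult k pderiv_power_Suc pderiv_power
    by (simp add: pderiv_pCons algebra_simps)
  have "fLX l x t = real x * (t ^ x * sqrt ((1 - t) / t)) * (1 - t) ^ (l - x)
      - real (l - x) * t ^ x * ((1 - t) ^ (l - x) * sqrt ((1 - (1 - t)) / (1 - t)))"
    by (simp add: fLX_def sigma_def algebra_simps)
  also have "(1 - t) ^ (l - x) * sqrt ((1 - (1 - t)) / (1 - t)) = (1 - t) ^ k * sqrt (t * (1 - t))"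
    using sqrt_mult[of "1 - t"] t by (simp add: k mult_ac)
  also have "real x * (t ^ x * sqrt ((1 - t) / t)) = real x * t ^ (x - 1) * sqrt (t * (1 - t))"
    using sqrt_mult[OF t(1)] by (cases x) (simp_all add: mult_ac)
  finally show ?thesis
    unfolding deriv by (simp add: algebra_simps)
qed

text \<open>In the variable \<open>y = 2 t - 1\<close>, \<open>fLX l x\<close> is \<open>\<surd>(1 - y\<^sup>2) / 2\<close> times a polynomial of degree
  \<open>< 2 n\<close> when \<open>x < l \<le> 2 n\<close>; the square root cancels against the weights of \<open>P\<^sub>c\<close>, so the
  quadrature is exact.\<close>

lemma GL_E_fLX:
  assumes "x < l" "l \<le> 2 * n"
  shows "GL_E (2 * n) (fLX l x) =
    (poly (bernstein_monomial l x) 1 - poly (bernstein_monomial l x) 0) / quadrature_inv_sqrt n"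
proof -
  define E where "E = bernstein_monomial l x"
  define D where "D = pcompose (pderiv E) [:1/2, 1/2:]"
  have "degree D \<le> degree (pderiv E)"
    using degree_pcompose_le[of "pderiv E" "[:1/2, 1/2 :: real:]"] by (simp add: D_def)
  also have "\<dots> < 2 * n"
    using degree_bernstein_monomial[of x l] assms by (simp add: E_def degree_pderiv)
  finally have exact: "(\<Sum>y\<in>legendre_roots n. gauss_weight n y * poly D y) = poly_integral D"
    by (rule gauss_quadrature_exact)
  have "gauss_weight n y / sqrt (1 - y\<^sup>2) * fLX l x ((y + 1) / 2) = gauss_weight n y * poly D y / 2"
    if y: "y \<in> legendre_roots n" for y
  proof -
    have y1: "-1 < y" "y < 1"
      using legendre_root_in_interval[OF y] by auto
    then have t: "0 < (y + 1) / 2" "(y + 1) / 2 < 1"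
      by auto
    have "1 - y\<^sup>2 > 0"
      using y1 by (simp add: abs_square_less_1 abs_less_iff)
    have "sqrt ((y + 1) / 2 * (1 - (y + 1) / 2)) = sqrt (1 - y\<^sup>2) / 2"
      by (simp add: field_simps power2_eq_square real_sqrt_divide)
    moreover have "poly (pderiv E) ((y + 1) / 2) = poly D y"
      by (simp add: D_def poly_pcompose field_simps)
    ultimately have f: "fLX l x ((y + 1) / 2) = sqrt (1 - y\<^sup>2) / 2 * poly D y"
      unfolding fLX_eq_sqrt_mult_pderiv[OF t assms(1)] E_def[symmetric] by (simp only:)
    have "sqrt (1 - y\<^sup>2) > 0"
      using \<open>1 - y\<^sup>2 > 0\<close> by simp
    then show ?thesis
      unfolding f by (simp add: field_simps)
  qed
  then have "(\<Sum>y\<in>legendre_roots n. gauss_weight n y / sqrt (1 - y\<^sup>2) * fLX l x ((y + 1) / 2))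
      = (\<Sum>y\<in>legendre_roots n. gauss_weight n y * poly D y / 2)"
    by (rule sum.cong[OF refl])
  also have "\<dots> = poly_integral D / 2"
    unfolding exact[symmetric] by (simp add: sum_divide_distrib)
  moreover have "poly_integral D = 2 * (poly E 1 - poly E 0)"
  proof -
    have "pderiv (pcompose E [:1/2, 1/2:]) = smult (1/2) D"
      by (simp add: D_def pderiv_pcompose pderiv_pCons)
    then have "poly E 1 - poly E 0 = 1/2 * poly_integral D"
      using poly_integral_pderiv[of "pcompose E [:1/2, 1/2:]"] by (simp add: poly_integral_smult poly_pcompose)
    then show ?thesis
      by simp
  qed
  ultimately show ?thesis
    by (simp add: GL_E_eq E_def)
qed

lemma calR_GL_E:
  assumes "1 \<le> l" "l \<le> 2 * n"
  shows "calR l (GL_E (2 * n)) = 1 / quadrature_inv_sqrt n"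
proof -
  have "R_lx (GL_E (2 * n)) l x = 0" if "x \<in> {1..l - 1}" for x
  proof -
    have x: "1 \<le> x" "x < l"
      using that assms by auto
    then have "poly (bernstein_monomial l x) 1 = 0" "poly (bernstein_monomial l x) 0 = 0"
      by (simp_all add: bernstein_monomial_def)
    then show ?thesis
      using GL_E_fLX[OF x(2) assms(2)] by (simp add: R_lx_def)
  qed
  moreover have "GL_E (2 * n) (\<lambda>p. - fLX l 0 p) = - GL_E (2 * n) (fLX l 0)"
    by (simp add: GL_E_eq sum_negf)
  moreover have "(0 :: real) ^ l = 0"
    using assms by simp
  ultimately show ?thesis
    using assms GL_E_fLX[of 0 l n] by (simp add: calR_def bernstein_monomial_def)
qed

theorem proposition6:
  shows "(\<forall>c::nat. even c \<and> c \<ge> 2 \<longrightarrow>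
            (\<forall>l. 1 \<le> l \<and> l \<le> c \<longrightarrow> calR l (GL_E c) \<ge> (real c + 1) / (real c * pi)))
       \<and> (\<forall>l::nat. l \<ge> 1 \<longrightarrow> ((\<lambda>\<nu>::nat. calR l (GL_E (2 * \<nu>))) \<longlonglongrightarrow> 1 / pi))"
proof (intro conjI allI impI)
  fix c l :: nat
  assume c: "even c \<and> c \<ge> 2" and l: "1 \<le> l \<and> l \<le> c"
  then obtain n where n: "c = 2 * n" "n \<ge> 1"
    by (auto elim!: evenE)
  have "(real c + 1) / (real c * pi) = 1 / (2 * real n * pi / (2 * real n + 1))"
    using n by simp
  also have "\<dots> \<le> 1 / quadrature_inv_sqrt n"
    using quadrature_inv_sqrt_le[of n] quadrature_inv_sqrt_ge_2[OF n(2)] n(2)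
    by (intro divide_left_mono) (auto intro!: mult_pos_pos divide_pos_pos)
  also have "\<dots> = calR l (GL_E c)"
    using l n by (simp add: calR_GL_E)
  finally show "calR l (GL_E c) \<ge> (real c + 1) / (real c * pi)" .
next
  fix l :: nat
  assume "l \<ge> 1"
  then have "eventually (\<lambda>n. 1 / quadrature_inv_sqrt n = calR l (GL_E (2 * n))) sequentially"
    by (intro eventually_sequentiallyI[of l]) (simp add: calR_GL_E)
  moreover have "(\<lambda>n. 1 / quadrature_inv_sqrt n) \<longlonglongrightarrow> 1 / pi"
    by (intro tendsto_divide tendsto_const quadrature_inv_sqrt_tendsto) simp
  ultimately show "(\<lambda>\<nu>. calR l (GL_E (2 * \<nu>))) \<longlonglongrightarrow> 1 / pi"
    by (rule Lim_transform_eventually[rotated])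
qed

end
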